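(* Fix $\mathcal F\in\{\mathcal P,\mathcal A,\mathcal P\cap\mathcal A'\}$. The output differential entropy $$h(Y)=-\int\!\!\int p(r,\phi;F_0)\ln p(r,\phi;F_0)\,dr\,d\phi,\qquad p(r,\phi;F_0)=\int p(r,\phi\mid r_0,\phi_0)\,dF_0(r_0,\phi_0),$$ is a continuous function of the joint input cdf $F_0$ of $(R_0,\Phi_0)$ with respect to weak convergence, on the set of $F_0$ whose amplitude marginal lies in $\mathcal F$.
   Context: Fix constants $\gamma>0$, $\sigma>0$, $\mathcal L>0$, and let $j=\sqrt{-1}$. For $m\in\mathbb N$ let $$a_m=\frac{\sqrt{jm\gamma}}{\sigma}\coth\!\big(\sqrt{jm\gamma\sigma^2}\,\mathcal L\big),\qquad b_m=\frac{\sqrt{jm\gamma}}{\sigma}\,\frac{1}{\sinh\!\big(\sqrt{jm\gamma\sigma^2}\,\mathcal L\big)},$$ with principal square roots. $I_m$ denotes the modified Bessel function of the first kind of order $m$. The PZD channel conditional density (input polar coordinates $(r_0,\phi_0)$, output polar coordinates $(r,\phi)$) is $$p(r,\phi\mid r_0,\phi_0)=\frac{1}{2\pi}p_{R|R_0}(r\mid r_0)+\frac1\pi\sum_{m\ge1}\Re\!\Big(C_m(r,r_0)\,e^{jm(\phi-\phi_0-\gamma r_0^2\mathcal L)}\Big),$$ where $$p_{R|R_0}(r\mid r_0)=\frac{2r}{\sigma^2\mathcal L}e^{-\frac{r^2+r_0^2}{\sigma^2\mathcal L}}I_0\!\Big(\frac{2rr_0}{\sigma^2\mathcal L}\Big),\qquad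 C_m(r,r_0)=r\,b_m\,e^{-a_m(r^2+r_0^2)}I_m(2b_m r_0 r).$$ Constraints. Fix $0<\rho<\infty$ and $0<A<\infty$. A function $\mathcal C:[0,\infty)\to[0,\infty)$ is an admissible cost if it satisfies two conditions: - (C1) it is lower semicontinuous and non-decreasing, with $\mathcal C(0)=0$ and $\lim_{r_0\to\infty}\mathcal C(r_0)=\infty$; - (C2) it extends analytically to a strip $\{z\in\mathbb C:|\Im z|<\delta\}$ for some $\delta>0$. The three sets of cdfs $F_{R_0}$ of $R_0$ are: - $\mathcal P=\{F_{R_0}:\int_0^\rho dF_{R_0}=1\}$; - $\mathcal A=\{F_{R_0}:\int_0^\infty\mathcal C\,dF_{R_0}\le A\}$ for an admissible cost with $\mathcal C(r_0)/r_0^2\to\infty$; - $\mathcal A'$, defined like $\mathcal A$ but with admissible $\mathcal C$ satisfying $\mathcal C(r_0)/\ln r_0\to\infty$. *)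

theory Defs
  imports "HOL-Analysis.Analysis" "HOL-Probability.Probability"
begin

definition besselI :: "nat \<Rightarrow> complex \<Rightarrow> complex" where
  "besselI m z = (\<Sum>k. (z / 2) ^ (2 * k + m) / (of_nat (fact k) * of_nat (fact (k + m))))"

definition coth_c :: "complex \<Rightarrow> complex" where
  "coth_c z = cosh z / sinh z"

definition a_coef :: "real \<Rightarrow> real \<Rightarrow> real \<Rightarrow> nat \<Rightarrow> complex" where
  "a_coef \<gamma> \<sigma> L m =
     csqrt (\<i> * of_nat m * of_real \<gamma>) / of_real \<sigma>
       * coth_c (csqrt (\<i> * of_nat m * of_real \<gamma> * of_real (\<sigma>\<^sup>2)) * of_real L)"

definition b_coef :: "real \<Rightarrow> real \<Rightarrow> real \<Rightarrow> nat \<Rightarrow> complex" where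
  "b_coef \<gamma> \<sigma> L m =
     csqrt (\<i> * of_nat m * of_real \<gamma>) / of_real \<sigma>
       / sinh (csqrt (\<i> * of_nat m * of_real \<gamma> * of_real (\<sigma>\<^sup>2)) * of_real L)"

definition C_coef :: "real \<Rightarrow> real \<Rightarrow> real \<Rightarrow> nat \<Rightarrow> real \<Rightarrow> real \<Rightarrow> complex" where
  "C_coef \<gamma> \<sigma> L m r r0 =
     of_real r * b_coef \<gamma> \<sigma> L m * exp (- a_coef \<gamma> \<sigma> L m * of_real (r\<^sup>2 + r0\<^sup>2))
       * besselI m (2 * b_coef \<gamma> \<sigma> L m * of_real r0 * of_real r)"

definition pR :: "real \<Rightarrow> real \<Rightarrow> real \<Rightarrow> real \<Rightarrow> real" where
  "pR \<sigma> L r r0 =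
     2 * r / (\<sigma>\<^sup>2 * L) * exp (- (r\<^sup>2 + r0\<^sup>2) / (\<sigma>\<^sup>2 * L))
       * Re (besselI 0 (of_real (2 * r * r0 / (\<sigma>\<^sup>2 * L))))"

definition pzd_cond :: "real \<Rightarrow> real \<Rightarrow> real \<Rightarrow> real \<Rightarrow> real \<Rightarrow> real \<Rightarrow> real \<Rightarrow> real" where
  "pzd_cond \<gamma> \<sigma> L r \<phi> r0 \<phi>0 =
     pR \<sigma> L r r0 / (2 * pi)
     + (1 / pi) * (\<Sum>k. Re (C_coef \<gamma> \<sigma> L (Suc k) r r0
            * exp (\<i> * of_nat (Suc k) * of_real (\<phi> - \<phi>0 - \<gamma> * r0\<^sup>2 * L))))"

definition out_density :: "real \<Rightarrow> real \<Rightarrow> real \<Rightarrow> (real \<times> real) measure \<Rightarrow> real \<Rightarrow> real \<Rightarrow> real" where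
  "out_density \<gamma> \<sigma> L F0 r \<phi> = (\<integral>x. pzd_cond \<gamma> \<sigma> L r \<phi> (fst x) (snd x) \<partial>F0)"

definition out_entropy :: "real \<Rightarrow> real \<Rightarrow> real \<Rightarrow> (real \<times> real) measure \<Rightarrow> real" where
  "out_entropy \<gamma> \<sigma> L F0 =
     - (LINT y : {0..} \<times> {0..<2*pi} | lborel.
          out_density \<gamma> \<sigma> L F0 (fst y) (snd y) * ln (out_density \<gamma> \<sigma> L F0 (fst y) (snd y)))"

text \<open>Joint input distributions of \<open>(R_0,\<Phi>_0)\<close> (polar coordinates).\<close>
definition input_dists :: "(real \<times> real) measure set" where
  "input_dists = {F0. prob_space F0 \<and> sets F0 = sets borel \<and>
      (AE x in F0. 0 \<le> fst x) \<and> (AE x in F0. snd x \<in> {0..<2*pi})}"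

definition weak_conv_seq :: "(nat \<Rightarrow> (real \<times> real) measure) \<Rightarrow> (real \<times> real) measure \<Rightarrow> bool" where
  "weak_conv_seq Fn F \<longleftrightarrow>
     (\<forall>f :: real \<times> real \<Rightarrow> real. continuous_on UNIV f \<and> bounded (range f) \<longrightarrow>
        (\<lambda>n. \<integral>x. f x \<partial>(Fn n)) \<longlonglongrightarrow> (\<integral>x. f x \<partial>F))"

definition weakly_continuous_on ::
  "(real \<times> real) measure set \<Rightarrow> ((real \<times> real) measure \<Rightarrow> real) \<Rightarrow> bool" where
  "weakly_continuous_on S H \<longleftrightarrow>
     (\<forall>Fn F. (\<forall>n. Fn n \<in> S) \<and> F \<in> S \<and> weak_conv_seq Fn F \<longrightarrow>
        (\<lambda>n. H (Fn n)) \<longlonglongrightarrow> H F)"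

definition admissible_cost :: "(real \<Rightarrow> real) \<Rightarrow> bool" where
  "admissible_cost C \<longleftrightarrow>
     (\<forall>x\<ge>0. 0 \<le> C x) \<and>
     (\<forall>a. openin (top_of_set {0..}) {x \<in> {0..}. a < C x}) \<and>
     mono_on {0..} C \<and> C 0 = 0 \<and> filterlim C at_top at_top \<and>
     (\<exists>\<delta>>0. \<exists>g. g holomorphic_on {z. \<bar>Im z\<bar> < \<delta>} \<and>
        (\<forall>x\<ge>0. g (of_real x) = of_real (C x)))"

text \<open>Sets of input distributions whose amplitude marginal lies in \<open>\<P>\<close> resp. \<open>\<A>\<close>.\<close>
definition peak_set :: "real \<Rightarrow> (real \<times> real) measure set" where
  "peak_set \<rho> = {F0 \<in> input_dists. AE x in F0. fst x \<le> \<rho>}"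

definition cost_set :: "(real \<Rightarrow> real) \<Rightarrow> real \<Rightarrow> (real \<times> real) measure set" where
  "cost_set C A = {F0 \<in> input_dists. (\<integral>\<^sup>+ x. ennreal (C (fst x)) \<partial>F0) \<le> ennreal A}"

end

theory Submission
  imports Defs "HOL-Real_Asymp.Real_Asymp"
begin

text \<open>
  Because \<open>Re a\<^sub>m \<ge> |b\<^sub>m|\<close>, \<open>Re a\<^sub>m \<ge> 1/(\<sigma>\<^sup>2\<L>)\<close>, \<open>|I\<^sub>m(z)| \<le> e\<^sup>|\<^sup>z\<^sup>|\<close> and \<open>\<Sum>|b\<^sub>m| < \<infinity>\<close>,
  the kernel \<open>p(r,\<phi> | r\<^sub>0,\<phi>\<^sub>0)\<close> is continuous and bounded by \<open>\<kappa> r exp(-(r - r\<^sub>0)\<^sup>2/(\<sigma>\<^sup>2\<L>))\<close>.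
  Hence, for weakly convergent inputs, the output densities converge pointwise and are bounded by
  \<open>\<kappa> r\<close>, so by dominated convergence the entropy integrals over \<open>r \<le> T\<close> converge.
  Using \<open>|x ln x| \<le> (2 + \<kappa>) r |x| + e\<^sup>-\<^sup>2\<^sup>r\<close> for \<open>|x| \<le> \<kappa> r\<close>, the part \<open>r > T\<close> is bounded by
  a multiple of \<open>e\<^sup>-\<^sup>T\<close> plus a multiple of \<open>E[(8 + 4 R\<^sub>0\<^sup>2); R\<^sub>0 > T/2]\<close>. This second-moment tail
  vanishes uniformly on \<open>\<P>\<close>, and on \<open>\<A>\<close> it is uniformly small because \<open>\<C>(r)/r\<^sup>2 \<rightarrow> \<infinity>\<close>.
\<close>

section \<open>Hyperbolic estimates\<close>

lemma sinh_ge_self: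
  fixes y :: real assumes "0 \<le> y" shows "y \<le> sinh y"
proof -
  have "(\<lambda>t. sinh t - t) 0 \<le> (\<lambda>t. sinh t - t) y"
  proof (rule DERIV_nonneg_imp_nondecreasing[OF assms])
    fix x :: real
    show "\<exists>d. ((\<lambda>t. sinh t - t) has_real_derivative d) (at x) \<and> 0 \<le> d"
      by (rule exI[of _ "cosh x - 1"]) (auto intro!: derivative_eq_intros simp: cosh_real_ge_1)
  qed
  then show ?thesis by simp
qed

lemma sinh_ge_pow5:
  fixes y :: real assumes "0 \<le> y" shows "y ^ 5 / 6250 \<le> sinh y"
proof -
  define t where "t = y / 5"
  have t: "0 \<le> t" using assms unfolding t_def by simp
  have "(1 + t) ^ 5 = 1 + t ^ 5 + t * (5 + 10 * t + 10 * t ^ 2 + 5 * t ^ 3)"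
    by (simp add: eval_nat_numeral algebra_simps)
  then have "1 + t ^ 5 \<le> (1 + t) ^ 5" using t by simp
  moreover have "(1 + t) ^ 5 \<le> exp y"
    using exp_ge_one_plus_x_over_n_power_n[where x = y and n = 5] assms unfolding t_def by simp
  moreover have "exp (- y) \<le> 1" using assms by simp
  moreover have "t ^ 5 = y ^ 5 / 3125" unfolding t_def by (simp add: power_divide)
  ultimately have "y ^ 5 / 3125 \<le> exp y - exp (- y)" by linarith
  then show ?thesis unfolding sinh_def by simp
qed

lemma abs_sin_le_sinh:
  fixes y :: real assumes "0 \<le> y" shows "\<bar>sin y\<bar> \<le> sinh y"
  using abs_sin_x_le_abs_x[of y] sinh_ge_self[OF assms] assms by simp

lemma abs_sin_cos_le_sinh_cosh:
  fixes y :: real assumes "0 \<le> y" shows "\<bar>sin y * cos y\<bar> \<le> sinh y * cosh y"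
proof -
  have "\<bar>sin y * cos y\<bar> \<le> sinh y * 1"
    unfolding abs_mult by (rule mult_mono) (use abs_sin_le_sinh[OF assms] assms in auto)
  also have "\<dots> \<le> sinh y * cosh y"
    by (rule mult_left_mono) (use assms cosh_real_ge_1 in auto)
  finally show ?thesis .
qed

lemma sin_sq_le_sinh_sq:
  fixes y :: real assumes "0 \<le> y" shows "sin y ^ 2 \<le> sinh y ^ 2"
  using abs_sin_le_sinh[OF assms] by (metis abs_le_square_iff abs_of_nonneg order.trans abs_ge_zero)

lemma sinh_sq_add_sin_sq_le_sq:
  fixes y :: real assumes "0 \<le> y"
  shows "2 * (sinh y ^ 2 + sin y ^ 2) \<le> (sinh y * cosh y + sin y * cos y) ^ 2"
proof -
  let ?F = "\<lambda>t::real. (sinh t * cosh t + sin t * cos t) ^ 2 - 2 * (sinh t ^ 2 + sin t ^ 2)"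
  have "?F 0 \<le> ?F y"
  proof (rule DERIV_nonneg_imp_nondecreasing[OF assms])
    fix x :: real assume x: "0 \<le> x" "x \<le> y"
    have "(?F has_real_derivative
        4 * (sinh x * cosh x + sin x * cos x) * (sinh x ^ 2 - sin x ^ 2)) (at x)"
      apply (rule derivative_eq_intros refl)+
      apply (simp add: power2_eq_square)
      using cosh_square_eq[of x, unfolded power2_eq_square]
        sin_cos_squared_add[of x, unfolded power2_eq_square]
      by algebra
    moreover have "0 \<le> 4 * (sinh x * cosh x + sin x * cos x) * (sinh x ^ 2 - sin x ^ 2)"
      using abs_sin_cos_le_sinh_cosh[OF x(1)] sin_sq_le_sinh_sq[OF x(1)]
      by (intro mult_nonneg_nonneg) auto
    ultimately show "\<exists>d. (?F has_real_derivative d) (at x) \<and> 0 \<le> d" by blast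
  qed
  then show ?thesis by simp
qed

lemma sinh_sq_add_sin_sq_le_mult:
  fixes y :: real assumes "0 \<le> y"
  shows "sinh y ^ 2 + sin y ^ 2 \<le> y * (sinh y * cosh y + sin y * cos y)"
proof -
  let ?H = "\<lambda>t::real. t * (2 + 2 * sinh t ^ 2 - 2 * sin t ^ 2) - (sinh t * cosh t + sin t * cos t)"
  let ?G = "\<lambda>t::real. t * (sinh t * cosh t + sin t * cos t) - (sinh t ^ 2 + sin t ^ 2)"
  have H_nonneg: "0 \<le> ?H x" if x: "0 \<le> x" for x
  proof -
    have "?H 0 \<le> ?H x"
    proof (rule DERIV_nonneg_imp_nondecreasing[OF x])
      fix z :: real assume z: "0 \<le> z" "z \<le> x"
      have "(?H has_real_derivative 4 * z * (sinh z * cosh z - sin z * cos z)) (at z)"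
        apply (rule derivative_eq_intros refl)+
        apply (simp add: power2_eq_square)
        using cosh_square_eq[of z, unfolded power2_eq_square]
          sin_cos_squared_add[of z, unfolded power2_eq_square]
        by algebra
      moreover have "0 \<le> 4 * z * (sinh z * cosh z - sin z * cos z)"
        using z abs_sin_cos_le_sinh_cosh[OF z(1)] by (intro mult_nonneg_nonneg) auto
      ultimately show "\<exists>d. (?H has_real_derivative d) (at z) \<and> 0 \<le> d" by blast
    qed
    then show ?thesis by simp
  qed
  have "?G 0 \<le> ?G y"
  proof (rule DERIV_nonneg_imp_nondecreasing[OF assms])
    fix x :: real assume x: "0 \<le> x" "x \<le> y"
    have "(?G has_real_derivative ?H x) (at x)"
      apply (rule derivative_eq_intros refl)+
      apply (simp add: power2_eq_square)
      using cosh_square_eq[of x, unfolded power2_eq_square]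
        sin_cos_squared_add[of x, unfolded power2_eq_square]
      by algebra
    then show "\<exists>d. (?G has_real_derivative d) (at x) \<and> 0 \<le> d" using H_nonneg[OF x(1)] by blast
  qed
  then show ?thesis by simp
qed

lemma csqrt_i_mult_of_real:
  assumes "0 \<le> t"
  shows "csqrt (\<i> * complex_of_real t) = complex_of_real (sqrt (t / 2)) * (1 + \<i>)"
proof (rule csqrt_unique)
  have "(1 + \<i>) ^ 2 = 2 * \<i>" by (simp add: complex_eq_iff power2_eq_square)
  then have "(complex_of_real (sqrt (t / 2)) * (1 + \<i>))\<^sup>2 = complex_of_real (t / 2) * (2 * \<i>)"
    using assms by (simp add: power_mult_distrib flip: of_real_power)
  then show "(complex_of_real (sqrt (t / 2)) * (1 + \<i>))\<^sup>2 = \<i> * complex_of_real t"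
    by (simp add: field_simps)
  show "0 < Re (complex_of_real (sqrt (t / 2)) * (1 + \<i>)) \<or>
      Re (complex_of_real (sqrt (t / 2)) * (1 + \<i>)) = 0 \<and>
      0 \<le> Im (complex_of_real (sqrt (t / 2)) * (1 + \<i>))"
    using assms by (cases "t = 0") auto
qed

lemma sinh_Complex_diag: "sinh (Complex y y) = Complex (sinh y * cos y) (cosh y * sin y)"
proof -
  have minus: "- Complex y y = Complex (- y) (- y)" by (simp add: complex_eq_iff)
  show ?thesis
    unfolding sinh_def minus exp_Complex by (simp add: complex_eq_iff sinh_def cosh_def exp_minus field_simps)
qed

lemma cosh_Complex_diag: "cosh (Complex y y) = Complex (cosh y * cos y) (sinh y * sin y)"
proof -
  have minus: "- Complex y y = Complex (- y) (- y)" by (simp add: complex_eq_iff)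
  show ?thesis
    unfolding cosh_def minus exp_Complex by (simp add: complex_eq_iff sinh_def cosh_def exp_minus field_simps)
qed

lemma norm_sinh_Complex_diag: "cmod (sinh (Complex y y)) = sqrt (sinh y ^ 2 + sin y ^ 2)"
proof -
  have "(sinh y * cos y)\<^sup>2 + (cosh y * sin y)\<^sup>2 = sinh y ^ 2 + sin y ^ 2"
    using cosh_square_eq[of y] sin_cos_squared_add[of y] by algebra
  then show ?thesis unfolding sinh_Complex_diag cmod_def by simp
qed

lemma Re_coth_Complex_diag:
  "Re ((1 + \<i>) * (cosh (Complex y y) / sinh (Complex y y)))
     = (sinh y * cosh y + sin y * cos y) / (sinh y ^ 2 + sin y ^ 2)"
proof -
  define sh ch sn cs where "sh = sinh y" "ch = cosh y" "sn = sin y" "cs = cos y"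
  have hyp: "ch * ch = sh * sh + 1"
    using cosh_square_eq[of y] unfolding sh_ch_sn_cs_def power2_eq_square by simp
  have trig: "sn * sn + cs * cs = 1"
    using sin_cos_squared_add[of y] unfolding sh_ch_sn_cs_def power2_eq_square by simp
  have "(1 + \<i>) * cosh (Complex y y) = Complex (ch * cs - sh * sn) (ch * cs + sh * sn)"
    unfolding cosh_Complex_diag sh_ch_sn_cs_def by (simp add: complex_eq_iff)
  then have "(1 + \<i>) * (cosh (Complex y y) / sinh (Complex y y))
      = Complex (ch * cs - sh * sn) (ch * cs + sh * sn) / Complex (sh * cs) (ch * sn)"
    unfolding sinh_Complex_diag sh_ch_sn_cs_def by (metis times_divide_eq_right)
  moreover have "(ch * cs - sh * sn) * (sh * cs) + (ch * cs + sh * sn) * (ch * sn) = sh * ch + sn * cs"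
    using hyp trig by algebra
  moreover have "(sh * cs) * (sh * cs) + (ch * sn) * (ch * sn) = sh * sh + sn * sn"
    using hyp trig by algebra
  ultimately show ?thesis unfolding sh_ch_sn_cs_def by (simp add: Re_divide power2_eq_square)
qed

text \<open>The coefficients \<open>a\<^sub>m\<close> and \<open>b\<^sub>m\<close> are positive multiples of \<open>(1 + \<i>) coth u\<close> and
  \<open>(1 + \<i>) / sinh u\<close> with \<open>u = y + \<i> y\<close>, \<open>y > 0\<close>.\<close>

lemma norm_div_sinh_Complex_diag_le_Re_coth:
  assumes "0 < y"
  shows "cmod ((1 + \<i>) / sinh (Complex y y)) \<le> Re ((1 + \<i>) * (cosh (Complex y y) / sinh (Complex y y)))"
proof -
  define D N where "D = sinh y ^ 2 + sin y ^ 2" and "N = sinh y * cosh y + sin y * cos y"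
  have D: "0 < D" unfolding D_def using assms by (simp add: add_pos_nonneg)
  have N: "0 \<le> N" using abs_sin_cos_le_sinh_cosh[of y] assms unfolding N_def by linarith
  have "sqrt 2 * sqrt D = sqrt (2 * D)" by (simp add: real_sqrt_mult)
  also have "\<dots> \<le> sqrt (N ^ 2)"
    using sinh_sq_add_sin_sq_le_sq[of y] assms unfolding D_def N_def by (simp del: real_sqrt_abs)
  also have "\<dots> = N" using N by simp
  finally have "sqrt 2 * sqrt D \<le> N" .
  moreover have "sqrt 2 / sqrt D = sqrt 2 * sqrt D / D" using D by (simp add: field_simps)
  ultimately have "sqrt 2 / sqrt D \<le> N / D" using D by (simp add: divide_right_mono)
  moreover have "cmod (1 + \<i>) = sqrt 2" by (simp add: cmod_def)
  ultimately show ?thesis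
    unfolding Re_coth_Complex_diag norm_divide norm_sinh_Complex_diag D_def N_def by simp
qed

lemma inverse_le_Re_coth_Complex_diag:
  assumes "0 < y"
  shows "1 / y \<le> Re ((1 + \<i>) * (cosh (Complex y y) / sinh (Complex y y)))"
proof -
  have "0 < sinh y ^ 2 + sin y ^ 2" using assms by (simp add: add_pos_nonneg)
  then show ?thesis
    unfolding Re_coth_Complex_diag using sinh_sq_add_sin_sq_le_mult[of y] assms by (simp add: field_simps)
qed

lemma norm_div_sinh_Complex_diag_le:
  assumes "0 < y"
  shows "cmod ((1 + \<i>) / sinh (Complex y y)) \<le> sqrt 2 / sinh y"
proof -
  have "sinh y \<le> sqrt (sinh y ^ 2 + sin y ^ 2)"
    using assms real_sqrt_le_mono[of "sinh y ^ 2" "sinh y ^ 2 + sin y ^ 2"] by simp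
  then have "sqrt 2 / sqrt (sinh y ^ 2 + sin y ^ 2) \<le> sqrt 2 / sinh y"
    using assms by (intro divide_left_mono) (auto simp: add_pos_nonneg)
  moreover have "cmod (1 + \<i>) = sqrt 2" by (simp add: cmod_def)
  ultimately show ?thesis unfolding norm_divide norm_sinh_Complex_diag by simp
qed

section \<open>The modified Bessel function\<close>

lemma fact_le_pow2_fact_mult: "fact (2 * k + m) \<le> (2::nat) ^ (2 * k + m) * (fact k * fact (k + m))"
proof -
  have "fact k * fact (2 * k + m - k) * ((2 * k + m) choose k) = (fact (2 * k + m) :: nat)"
    by (rule binomial_fact_lemma) simp
  then have "fact (2 * k + m) = fact k * fact (k + m) * ((2 * k + m) choose k)"
    by (simp add: add.commute mult_2)
  also have "\<dots> \<le> fact k * fact (k + m) * 2 ^ (2 * k + m)"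
    by (intro mult_left_mono binomial_le_pow2) simp
  finally show ?thesis by (simp add: mult.commute)
qed

lemma exp_series_shifted_even:
  fixes x :: real assumes "0 \<le> x"
  shows "summable (\<lambda>k. x ^ (2 * k + m) / fact (2 * k + m))"
    and "(\<Sum>k. x ^ (2 * k + m) / fact (2 * k + m)) \<le> exp x"
proof -
  have sums: "(\<lambda>n. x ^ n / fact n) sums exp x"
    using exp_converges[of x] by (simp add: divide_inverse mult.commute scaleR_conv_of_real)
  have inj: "inj (\<lambda>k::nat. 2 * k + m)" by (rule injI) simp
  have nonneg: "\<And>n. 0 \<le> x ^ n / fact n" using assms by simp
  show "summable (\<lambda>k. x ^ (2 * k + m) / fact (2 * k + m))"
    using summable_reindex[OF sums_summable[OF sums] inj nonneg] by (simp add: o_def)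
  show "(\<Sum>k. x ^ (2 * k + m) / fact (2 * k + m)) \<le> exp x"
    using suminf_reindex_mono[OF sums_summable[OF sums] inj nonneg] sums_unique[OF sums]
    by (simp add: o_def)
qed

lemma besselI_eq: "besselI m z = (\<Sum>k. (z / 2) ^ (2 * k + m) / (fact k * fact (k + m) :: complex))"
  by (simp add: besselI_def)

lemma norm_besselI_term_le:
  "cmod ((z / 2) ^ (2 * k + m) / (fact k * fact (k + m) :: complex))
     \<le> cmod z ^ (2 * k + m) / fact (2 * k + m)"
proof -
  have "(fact (2 * k + m) :: real) \<le> 2 ^ (2 * k + m) * (fact k * fact (k + m))"
    using fact_le_pow2_fact_mult[of k m]
    by (metis (mono_tags) of_nat_fact of_nat_le_iff of_nat_mult of_nat_numeral of_nat_power)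
  then have "cmod z ^ (2 * k + m) / (2 ^ (2 * k + m) * (fact k * fact (k + m)))
      \<le> cmod z ^ (2 * k + m) / fact (2 * k + m)"
    by (rule divide_left_mono) auto
  then show ?thesis by (simp add: norm_divide norm_power norm_mult power_divide)
qed

lemma summable_norm_besselI_terms:
  "summable (\<lambda>k. cmod ((z / 2) ^ (2 * k + m) / (fact k * fact (k + m) :: complex)))"
  by (rule summable_comparison_test[OF _ exp_series_shifted_even(1)[of "cmod z" m]])
     (auto intro!: exI[of _ 0] norm_besselI_term_le)

lemma norm_besselI_le: "cmod (besselI m z) \<le> exp (cmod z)"
proof -
  have "cmod (besselI m z) \<le> (\<Sum>k. cmod ((z / 2) ^ (2 * k + m) / (fact k * fact (k + m) :: complex)))"
    unfolding besselI_eq by (rule summable_norm[OF summable_norm_besselI_terms])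
  also have "\<dots> \<le> (\<Sum>k. cmod z ^ (2 * k + m) / fact (2 * k + m))"
    by (rule suminf_le[OF _ summable_norm_besselI_terms exp_series_shifted_even(1)])
       (auto intro: norm_besselI_term_le)
  also have "\<dots> \<le> exp (cmod z)" by (rule exp_series_shifted_even(2)) simp
  finally show ?thesis .
qed

lemma continuous_on_cball_besselI:
  assumes "0 \<le> R" shows "continuous_on (cball 0 R) (besselI m)"
proof -
  let ?u = "\<lambda>k (z::complex). (z / 2) ^ (2 * k + m) / (fact k * fact (k + m) :: complex)"
  have "uniform_limit (cball 0 R) (\<lambda>n z. \<Sum>k<n. ?u k z) (\<lambda>z. \<Sum>k. ?u k z) sequentially"
  proof (rule Weierstrass_m_test)
    fix k and z :: complex assume "z \<in> cball 0 R"
    then have "cmod z ^ (2 * k + m) / fact (2 * k + m) \<le> R ^ (2 * k + m) / fact (2 * k + m)"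
      by (intro divide_right_mono power_mono) auto
    then show "norm (?u k z) \<le> R ^ (2 * k + m) / fact (2 * k + m)"
      using norm_besselI_term_le order.trans by blast
  qed (rule exp_series_shifted_even(1)[OF assms])
  then have "continuous_on (cball 0 R) (\<lambda>z. \<Sum>k. ?u k z)"
    by (rule uniform_limit_theorem[rotated]) (auto intro!: always_eventually continuous_intros)
  then show ?thesis unfolding besselI_eq[abs_def] .
qed

lemma isCont_besselI: "isCont (besselI m) z"
  by (rule continuous_on_interior[OF continuous_on_cball_besselI[of "cmod z + 1"]])
     (auto simp: interior_cball)

lemma continuous_on_besselI [continuous_intros]:
  "continuous_on S f \<Longrightarrow> continuous_on S (\<lambda>x. besselI m (f x))"
  by (rule continuous_on_compose2[OF continuous_at_imp_continuous_on[of UNIV "besselI m"]])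
     (auto intro: isCont_besselI)

section \<open>The function \<open>x ln x\<close>\<close>

lemma ln_abs_real: "ln \<bar>x\<bar> = ln (x::real)"
  by (cases "0 \<le> x") (simp_all add: ln_minus)

lemma isCont_mult_ln: "isCont (\<lambda>x::real. x * ln x) x"
proof (cases "x = 0")
  case True
  have "((\<lambda>x::real. x * ln x) \<longlongrightarrow> 0) (at_right 0)" by real_asymp
  moreover have "((\<lambda>x::real. x * ln (- x)) \<longlongrightarrow> 0) (at_left 0)" by real_asymp
  ultimately have "((\<lambda>x::real. x * ln x) \<longlongrightarrow> 0) (at 0)"
    by (simp add: filterlim_split_at ln_minus)
  then show ?thesis using True unfolding isCont_def by simp
next
  case False
  then have "isCont (\<lambda>x::real. x * ln \<bar>x\<bar>) x" by (intro continuous_intros) auto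
  then show ?thesis by (simp add: ln_abs_real)
qed

lemma abs_mult_ln_le:
  fixes x E r K :: real
  assumes r: "0 \<le> r" and xE: "\<bar>x\<bar> \<le> E" and EK: "E \<le> K * r" and K: "0 \<le> K"
  shows "\<bar>x * ln x\<bar> \<le> (2 + K) * r * E + exp (- 2 * r)"
proof -
  define u where "u = \<bar>x\<bar>"
  have eq: "\<bar>x * ln x\<bar> = u * \<bar>ln u\<bar>" unfolding u_def by (simp add: abs_mult ln_abs_real)
  have rE: "0 \<le> r * E" using r xE by simp
  consider "u = 0" | "0 < u" "u \<le> 1" | "1 < u" unfolding u_def by fastforce
  then show ?thesis
  proof cases
    case 1
    then have "x = 0" unfolding u_def by simp
    moreover have "0 \<le> (2 + K) * (r * E)" using K rE by simp
    ultimately show ?thesis by (simp add: add_nonneg_nonneg mult.assoc)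
  next
    case 2
    \<comment> \<open>apply \<open>ln t \<le> t - 1\<close> at \<open>t = e\<^sup>-\<^sup>2\<^sup>r / u\<close>\<close>
    have "ln (exp (- 2 * r) / u) \<le> exp (- 2 * r) / u - 1" by (rule ln_le_minus_one) (use 2 in simp)
    then have "u * (- 2 * r - ln u) \<le> u * (exp (- 2 * r) / u - 1)"
      using 2 by (intro mult_left_mono) (auto simp: ln_div)
    then have "- (u * ln u) \<le> 2 * r * u + exp (- 2 * r) - u" using 2 by (simp add: algebra_simps)
    moreover have "2 * r * u \<le> 2 * r * E" using xE r unfolding u_def by (intro mult_left_mono) auto
    moreover have "0 \<le> K * (r * E)" using K rE by simp
    moreover have "u * \<bar>ln u\<bar> = - (u * ln u)" using 2 by simp
    ultimately show ?thesis using 2 eq by (simp add: algebra_simps)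
  next
    case 3
    have "u \<le> K * r" using xE EK unfolding u_def by linarith
    then have "ln u \<le> K * r - 1" using 3 by (intro order.trans[OF _ ln_le_minus_one]) auto
    then have "u * ln u \<le> E * (K * r)"
      using 3 xE K r unfolding u_def by (intro mult_mono) auto
    moreover have "(2 + K) * r * E = E * (K * r) + 2 * (r * E)" by (simp add: algebra_simps)
    moreover have "\<bar>x * ln x\<bar> = u * ln u" using 3 eq by simp
    moreover have "0 < exp (- 2 * r)" by simp
    ultimately show ?thesis using rE by linarith
  qed
qed

section \<open>Tail integrals of the Gaussian envelope\<close>

lemma nn_integral_power_exp_Ici:
  "(\<integral>\<^sup>+x. indicator {0..} x * ennreal (x ^ k * exp (- x)) \<partial>lborel) = ennreal (fact k)"
  using nn_intergal_power_times_exp_Ici[of k] by (simp add: mult.commute)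

lemma nn_integral_abs_power_exp_le:
  "(\<integral>\<^sup>+r. ennreal (\<bar>r - c\<bar> ^ k * exp (- \<bar>r - c\<bar>)) \<partial>lborel) \<le> 2 * ennreal (fact k)"
proof -
  let ?g = "\<lambda>t::real. indicator {0..} t * ennreal (\<bar>t\<bar> ^ k * exp (- \<bar>t\<bar>))"
  have g: "(\<integral>\<^sup>+t. ?g t \<partial>lborel) = ennreal (fact k)"
  proof -
    have "?g t = indicator {0..} t * ennreal (t ^ k * exp (- t))" for t
      by (cases "0 \<le> t") auto
    then show ?thesis using nn_integral_power_exp_Ici[of k] by simp
  qed
  have "(\<integral>\<^sup>+r. ennreal (\<bar>r - c\<bar> ^ k * exp (- \<bar>r - c\<bar>)) \<partial>lborel)
      = (\<integral>\<^sup>+t. ennreal (\<bar>t\<bar> ^ k * exp (- \<bar>t\<bar>)) \<partial>lborel)"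
    using nn_integral_real_affine[of "\<lambda>r. ennreal (\<bar>r - c\<bar> ^ k * exp (- \<bar>r - c\<bar>))" 1 c] by simp
  also have "\<dots> \<le> (\<integral>\<^sup>+t. ?g t + ?g (- t) \<partial>lborel)"
    by (intro nn_integral_mono) (auto split: split_indicator)
  also have "\<dots> = (\<integral>\<^sup>+t. ?g t \<partial>lborel) + (\<integral>\<^sup>+t. ?g (- t) \<partial>lborel)"
    by (rule nn_integral_add) measurable
  also have "(\<integral>\<^sup>+t. ?g (- t) \<partial>lborel) = (\<integral>\<^sup>+t. ?g t \<partial>lborel)"
    using nn_integral_real_affine[of ?g "-1" 0] by simp
  finally show ?thesis unfolding g by (simp add: mult_2)
qed

definition gauss_envelope :: "real \<Rightarrow> real \<Rightarrow> real \<Rightarrow> real \<Rightarrow> real" where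
  "gauss_envelope K S r a = K * \<bar>r\<bar> * exp (- ((\<bar>r\<bar> - \<bar>a\<bar>)\<^sup>2 / S))"

lemma gauss_envelope_nonneg: "0 \<le> K \<Longrightarrow> 0 \<le> gauss_envelope K S r a"
  unfolding gauss_envelope_def by simp

lemma gauss_envelope_le: "0 \<le> K \<Longrightarrow> 0 < S \<Longrightarrow> gauss_envelope K S r a \<le> K * \<bar>r\<bar>"
  unfolding gauss_envelope_def by (simp add: mult_left_le)

lemma continuous_on_gauss_envelope [continuous_intros]:
  "0 < S \<Longrightarrow> continuous_on A f \<Longrightarrow> continuous_on A g \<Longrightarrow>
    continuous_on A (\<lambda>x. gauss_envelope K S (f x) (g x))"
  unfolding gauss_envelope_def by (intro continuous_intros) auto

definition envelope_tail :: "real \<Rightarrow> real \<Rightarrow> real \<Rightarrow> real \<Rightarrow> ennreal" where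
  "envelope_tail K S T a = (\<integral>\<^sup>+ r. indicator {T<..} r * ennreal (r * gauss_envelope K S r a) \<partial>lborel)"

text \<open>If \<open>2|a| \<le> T < r\<close> then \<open>(r - |a|)\<^sup>2 \<ge> r\<^sup>2/4 \<ge> S (2r - 4S)\<close>.\<close>

lemma mult_gauss_envelope_le_far:
  assumes "0 \<le> K" "0 < S" "2 * \<bar>a\<bar> \<le> T" "T < r"
  shows "r * gauss_envelope K S r a \<le> K * exp (4 * S) * exp (- T) * (r ^ 2 * exp (- r))"
proof -
  have r: "0 \<le> r" using assms by linarith
  have "(r / 2) ^ 2 \<le> (r - \<bar>a\<bar>) ^ 2" using assms by (intro power_mono) auto
  moreover have "8 * S * r - 16 * S ^ 2 \<le> r ^ 2"
    using zero_le_power2[of "r - 4 * S"] by (simp add: power2_eq_square algebra_simps)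
  ultimately have "r ^ 2 / (4 * S) \<le> (\<bar>r\<bar> - \<bar>a\<bar>)\<^sup>2 / S" "2 * r - 4 * S \<le> r ^ 2 / (4 * S)"
    using assms r by (simp_all add: field_simps power2_eq_square)
  then have "exp (- ((\<bar>r\<bar> - \<bar>a\<bar>)\<^sup>2 / S)) \<le> exp (4 * S) * exp (- T) * exp (- r)"
    using assms by (simp flip: exp_add)
  then have "K * r ^ 2 * exp (- ((\<bar>r\<bar> - \<bar>a\<bar>)\<^sup>2 / S)) \<le> K * r ^ 2 * (exp (4 * S) * exp (- T) * exp (- r))"
    using assms by (intro mult_left_mono) auto
  then show ?thesis unfolding gauss_envelope_def using r by (simp add: power2_eq_square mult_ac)
qed

lemma envelope_tail_far:
  assumes "0 \<le> K" "0 < S" "0 \<le> T" "2 * \<bar>a\<bar> \<le> T"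
  shows "envelope_tail K S T a \<le> ennreal (2 * K * exp (4 * S) * exp (- T))"
proof -
  define c where "c = K * exp (4 * S) * exp (- T)"
  have c: "0 \<le> c" unfolding c_def using assms by simp
  have "envelope_tail K S T a \<le> (\<integral>\<^sup>+ r. ennreal c * (indicator {0..} r * ennreal (r ^ 2 * exp (- r))) \<partial>lborel)"
    unfolding envelope_tail_def
  proof (rule nn_integral_mono)
    fix r show "indicator {T<..} r * ennreal (r * gauss_envelope K S r a)
        \<le> ennreal c * (indicator {0..} r * ennreal (r ^ 2 * exp (- r)))"
      using mult_gauss_envelope_le_far[OF assms(1,2,4), of r] assms(3) c
      by (cases "T < r") (auto simp: c_def ennreal_mult[symmetric] intro: ennreal_leI)
  qed
  also have "\<dots> = ennreal c * ennreal 2"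
    by (subst nn_integral_cmult) (use nn_integral_power_exp_Ici[of 2] in auto)
  also have "\<dots> = ennreal (c * 2)" by (simp add: ennreal_mult'')
  also have "c * 2 = 2 * K * exp (4 * S) * exp (- T)" unfolding c_def by simp
  finally show ?thesis .
qed

lemma mult_gauss_envelope_le:
  assumes "0 \<le> K" "0 < S" "0 \<le> r"
  shows "r * gauss_envelope K S r a
    \<le> 2 * K * exp (S / 4) * ((\<bar>r - \<bar>a\<bar>\<bar> ^ 2 + a ^ 2) * exp (- \<bar>r - \<bar>a\<bar>\<bar>))"
proof -
  have "r ^ 2 \<le> 2 * \<bar>r - \<bar>a\<bar>\<bar> ^ 2 + 2 * a ^ 2"
    using zero_le_power2[of "r - 2 * \<bar>a\<bar>"] by (simp add: power2_eq_square algebra_simps abs_mult_self)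
  moreover have "S * \<bar>r - \<bar>a\<bar>\<bar> - S ^ 2 / 4 \<le> (\<bar>r\<bar> - \<bar>a\<bar>)\<^sup>2"
    using zero_le_power2[of "\<bar>r - \<bar>a\<bar>\<bar> - S / 2"] assms(3) by (simp add: power2_eq_square algebra_simps)
  then have "exp (- ((\<bar>r\<bar> - \<bar>a\<bar>)\<^sup>2 / S)) \<le> exp (S / 4) * exp (- \<bar>r - \<bar>a\<bar>\<bar>)"
    using assms(2) by (simp add: field_simps power2_eq_square flip: exp_add)
  ultimately have "K * r ^ 2 * exp (- ((\<bar>r\<bar> - \<bar>a\<bar>)\<^sup>2 / S))
      \<le> K * (2 * \<bar>r - \<bar>a\<bar>\<bar> ^ 2 + 2 * a ^ 2) * (exp (S / 4) * exp (- \<bar>r - \<bar>a\<bar>\<bar>))"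
    using assms by (intro mult_mono) auto
  then show ?thesis unfolding gauss_envelope_def using assms(3) by (simp add: power2_eq_square algebra_simps)
qed

lemma envelope_tail_le:
  assumes "0 \<le> K" "0 < S" "0 \<le> T"
  shows "envelope_tail K S T a \<le> ennreal (K * exp (S / 4) * (8 + 4 * a ^ 2))"
proof -
  define c where "c = 2 * K * exp (S / 4)"
  have c: "0 \<le> c" unfolding c_def using assms by simp
  let ?e = "\<lambda>k r. ennreal (\<bar>r - \<bar>a\<bar>\<bar> ^ k * exp (- \<bar>r - \<bar>a\<bar>\<bar>))"
  have "envelope_tail K S T a \<le> (\<integral>\<^sup>+ r. ennreal c * ?e 2 r + ennreal (c * a ^ 2) * ?e 0 r \<partial>lborel)"
    unfolding envelope_tail_def
  proof (rule nn_integral_mono)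
    fix r :: real
    have "indicator {T<..} r * ennreal (r * gauss_envelope K S r a)
        \<le> ennreal (c * (\<bar>r - \<bar>a\<bar>\<bar> ^ 2 * exp (- \<bar>r - \<bar>a\<bar>\<bar>)) + c * a ^ 2 * exp (- \<bar>r - \<bar>a\<bar>\<bar>))"
      using mult_gauss_envelope_le[OF assms(1,2), of r a] assms(3)
      by (cases "T < r") (auto simp: c_def algebra_simps intro: ennreal_leI)
    also have "\<dots> = ennreal c * ?e 2 r + ennreal (c * a ^ 2) * ?e 0 r"
      using c by (simp add: ennreal_plus ennreal_mult[symmetric] mult_ac)
    finally show "indicator {T<..} r * ennreal (r * gauss_envelope K S r a)
        \<le> ennreal c * ?e 2 r + ennreal (c * a ^ 2) * ?e 0 r" .
  qed
  also have "\<dots> = ennreal c * (\<integral>\<^sup>+ r. ?e 2 r \<partial>lborel) + ennreal (c * a ^ 2) * (\<integral>\<^sup>+ r. ?e 0 r \<partial>lborel)"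
    by (subst nn_integral_add) (auto simp: nn_integral_cmult)
  also have "\<dots> \<le> ennreal c * (2 * ennreal (fact 2)) + ennreal (c * a ^ 2) * (2 * ennreal (fact 0))"
    by (intro add_mono mult_left_mono nn_integral_abs_power_exp_le) auto
  also have "\<dots> = ennreal (c * 4) + ennreal (c * a ^ 2 * 2)" by (simp add: ennreal_mult'')
  also have "\<dots> = ennreal (c * 4 + c * a ^ 2 * 2)" using c by (simp add: ennreal_plus)
  also have "c * 4 + c * a ^ 2 * 2 = K * exp (S / 4) * (8 + 4 * a ^ 2)"
    unfolding c_def by (simp add: algebra_simps)
  finally show ?thesis .
qed

section \<open>The channel kernel\<close>

locale pzd_channel =
  fixes \<gamma> \<sigma> L :: real
  assumes gamma_pos: "0 < \<gamma>" and sigma_pos: "0 < \<sigma>" and L_pos: "0 < L"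
begin

definition noise_var :: real where "noise_var = \<sigma>\<^sup>2 * L"

lemma noise_var_pos: "0 < noise_var"
  unfolding noise_var_def using sigma_pos L_pos by simp

text \<open>\<open>csqrt (\<i> m \<gamma> \<sigma>\<^sup>2) L = y\<^sub>m (1 + \<i>)\<close> with \<open>y\<^sub>m = diag_arg m\<close>.\<close>

definition diag_arg :: "nat \<Rightarrow> real" where "diag_arg m = sqrt (real m * \<gamma> * \<sigma>\<^sup>2 / 2) * L"

lemma diag_arg_pos: "0 < m \<Longrightarrow> 0 < diag_arg m"
  unfolding diag_arg_def using gamma_pos sigma_pos L_pos by simp

lemma a_coef_b_coef_eq:
  fixes m :: nat
  defines "y \<equiv> diag_arg m"
  shows "a_coef \<gamma> \<sigma> L m
           = complex_of_real (y / noise_var) * ((1 + \<i>) * (cosh (Complex y y) / sinh (Complex y y)))"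
    and "b_coef \<gamma> \<sigma> L m = complex_of_real (y / noise_var) * ((1 + \<i>) / sinh (Complex y y))"
proof -
  have "sqrt (real m * \<gamma> * \<sigma>\<^sup>2 / 2) = sqrt (real m * \<gamma> / 2) * sqrt (\<sigma>\<^sup>2)"
    by (subst real_sqrt_mult[symmetric]) (simp add: field_simps)
  then have "y = sqrt (real m * \<gamma> / 2) * \<sigma> * L"
    unfolding y_def diag_arg_def using sigma_pos by simp
  then have y: "sqrt (real m * \<gamma> / 2) / \<sigma> = y / noise_var"
    unfolding noise_var_def using sigma_pos L_pos by (simp add: field_simps power2_eq_square)
  have "csqrt (\<i> * of_nat m * complex_of_real \<gamma>) / complex_of_real \<sigma>
      = complex_of_real (y / noise_var) * (1 + \<i>)"
    using csqrt_i_mult_of_real[of "real m * \<gamma>"] gamma_pos y[symmetric]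
    by (simp add: field_simps mult.assoc)
  moreover have "csqrt (\<i> * of_nat m * complex_of_real \<gamma> * complex_of_real (\<sigma>\<^sup>2)) * complex_of_real L
      = Complex y y"
    using csqrt_i_mult_of_real[of "real m * \<gamma> * \<sigma>\<^sup>2"] gamma_pos
    unfolding y_def diag_arg_def by (simp add: complex_eq_iff mult.assoc)
  ultimately show "a_coef \<gamma> \<sigma> L m
      = complex_of_real (y / noise_var) * ((1 + \<i>) * (cosh (Complex y y) / sinh (Complex y y)))"
    and "b_coef \<gamma> \<sigma> L m = complex_of_real (y / noise_var) * ((1 + \<i>) / sinh (Complex y y))"
    unfolding a_coef_def b_coef_def coth_c_def by (simp_all add: mult.assoc)
qed

lemma Re_a_coef_norm_b_coef:
  fixes m :: nat
  defines "c \<equiv> diag_arg m / noise_var" and "u \<equiv> Complex (diag_arg m) (diag_arg m)"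
  shows "Re (a_coef \<gamma> \<sigma> L m) = c * Re ((1 + \<i>) * (cosh u / sinh u))"
    and "cmod (b_coef \<gamma> \<sigma> L m) = c * cmod ((1 + \<i>) / sinh u)"
proof -
  have "0 \<le> c" unfolding c_def diag_arg_def using noise_var_pos L_pos gamma_pos by simp
  moreover have Re_mult: "\<And>c z. Re (complex_of_real c * z) = c * Re z" by simp
  ultimately show "Re (a_coef \<gamma> \<sigma> L m) = c * Re ((1 + \<i>) * (cosh u / sinh u))"
    and "cmod (b_coef \<gamma> \<sigma> L m) = c * cmod ((1 + \<i>) / sinh u)"
    unfolding a_coef_b_coef_eq c_def[symmetric] u_def[symmetric] Re_mult
      norm_mult norm_of_real by simp_all
qed

lemma norm_b_coef_le_Re_a_coef:
  assumes "0 < m" shows "cmod (b_coef \<gamma> \<sigma> L m) \<le> Re (a_coef \<gamma> \<sigma> L m)"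
  unfolding Re_a_coef_norm_b_coef
  by (rule mult_left_mono[OF norm_div_sinh_Complex_diag_le_Re_coth[OF diag_arg_pos[OF assms]]])
     (use diag_arg_pos[OF assms] noise_var_pos in simp)

lemma Re_a_coef_ge:
  assumes "0 < m" shows "1 / noise_var \<le> Re (a_coef \<gamma> \<sigma> L m)"
proof -
  have "1 / noise_var = diag_arg m / noise_var * (1 / diag_arg m)"
    using diag_arg_pos[OF assms] by simp
  also have "\<dots> \<le> Re (a_coef \<gamma> \<sigma> L m)"
    unfolding Re_a_coef_norm_b_coef
    by (rule mult_left_mono[OF inverse_le_Re_coth_Complex_diag[OF diag_arg_pos[OF assms]]])
       (use diag_arg_pos[OF assms] noise_var_pos in simp)
  finally show ?thesis .
qed

lemma norm_b_coef_le:
  assumes "0 < m"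
  shows "cmod (b_coef \<gamma> \<sigma> L m) \<le> diag_arg m / noise_var * (sqrt 2 / sinh (diag_arg m))"
  unfolding Re_a_coef_norm_b_coef
  by (rule mult_left_mono[OF norm_div_sinh_Complex_diag_le[OF diag_arg_pos[OF assms]]])
     (use diag_arg_pos[OF assms] noise_var_pos in simp)


text \<open>Since \<open>y\<^sub>m\<close> grows like \<open>\<surd>m\<close> and \<open>sinh y \<ge> y\<^sup>5 / 6250\<close>, \<open>|b\<^sub>m|\<close> decays like \<open>m\<^sup>-\<^sup>2\<close>.\<close>

lemma summable_norm_b_coef: "summable (\<lambda>k. cmod (b_coef \<gamma> \<sigma> L (Suc k)))"
proof -
  define q where "q = \<gamma> * \<sigma>\<^sup>2 / 2"
  have q: "0 < q" unfolding q_def using gamma_pos sigma_pos by simp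
  define K where "K = sqrt 2 / noise_var * 6250 / (q ^ 2 * L ^ 4)"
  have bound: "cmod (b_coef \<gamma> \<sigma> L (Suc k)) \<le> K * inverse (real (Suc k) ^ 2)" for k
  proof -
    define y where "y = diag_arg (Suc k)"
    have y: "0 < y" unfolding y_def by (rule diag_arg_pos) simp
    have "y = sqrt (real (Suc k) * q) * L" unfolding y_def diag_arg_def q_def by (simp add: mult.assoc)
    then have "y ^ 4 = (sqrt (real (Suc k) * q) ^ 2) ^ 2 * L ^ 4" by (simp add: power_mult_distrib)
    then have y4: "y ^ 4 = real (Suc k) ^ 2 * q ^ 2 * L ^ 4" using q by (simp add: power_mult_distrib)
    have "cmod (b_coef \<gamma> \<sigma> L (Suc k)) \<le> y / noise_var * (sqrt 2 / sinh y)"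
      unfolding y_def by (rule norm_b_coef_le) simp
    also have "\<dots> \<le> y / noise_var * (sqrt 2 / (y ^ 5 / 6250))"
      using sinh_ge_pow5[of y] y noise_var_pos
      by (intro mult_left_mono divide_left_mono) auto
    also have "\<dots> = sqrt 2 * 6250 / (noise_var * y ^ 4)"
      using y noise_var_pos by (simp add: field_simps eval_nat_numeral)
    also have "\<dots> = K * inverse (real (Suc k) ^ 2)"
      unfolding K_def y4 using q L_pos noise_var_pos by (simp add: field_simps)
    finally show ?thesis .
  qed
  have "summable (\<lambda>k. inverse (real (Suc k) ^ 2))"
    using summable_Suc_iff[where f = "\<lambda>n. inverse (real n ^ 2)"] inverse_power_summable[of 2] by simp
  then have "summable (\<lambda>k. K * inverse (real (Suc k) ^ 2))" by (rule summable_mult)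
  then show ?thesis
    by (rule summable_comparison_test[rotated]) (use bound in \<open>auto intro!: exI[of _ 0]\<close>)
qed

definition b_sum :: real where "b_sum = (\<Sum>k. cmod (b_coef \<gamma> \<sigma> L (Suc k)))"

definition kernel_const :: real where "kernel_const = 1 / (pi * noise_var) + b_sum / pi"

lemma kernel_const_pos: "0 < kernel_const"
proof -
  have "0 \<le> b_sum" unfolding b_sum_def by (rule suminf_nonneg[OF summable_norm_b_coef]) simp
  then show ?thesis unfolding kernel_const_def using noise_var_pos by (simp add: add_pos_nonneg)
qed

lemma exp_quadratic_le_gauss:
  assumes "B \<le> A" "1 / noise_var \<le> A" "0 \<le> B"
  shows "exp (- A * (r\<^sup>2 + r0\<^sup>2)) * exp (2 * B * \<bar>r0\<bar> * \<bar>r\<bar>) \<le> exp (- ((\<bar>r\<bar> - \<bar>r0\<bar>)\<^sup>2 / noise_var))"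
proof -
  have "2 * B * \<bar>r0\<bar> * \<bar>r\<bar> \<le> 2 * A * \<bar>r0\<bar> * \<bar>r\<bar>"
    using assms by (intro mult_right_mono) auto
  moreover have "(\<bar>r\<bar> - \<bar>r0\<bar>)\<^sup>2 / noise_var \<le> A * (\<bar>r\<bar> - \<bar>r0\<bar>)\<^sup>2"
  proof -
    have "1 * (\<bar>r\<bar> - \<bar>r0\<bar>)\<^sup>2 \<le> (A * noise_var) * (\<bar>r\<bar> - \<bar>r0\<bar>)\<^sup>2"
      using assms(2) noise_var_pos by (intro mult_right_mono) (simp_all add: field_simps)
    then show ?thesis using noise_var_pos by (simp add: field_simps)
  qed
  moreover have "A * (\<bar>r\<bar> - \<bar>r0\<bar>)\<^sup>2 = A * (r\<^sup>2 + r0\<^sup>2) - 2 * A * \<bar>r0\<bar> * \<bar>r\<bar>"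
    by (simp add: power2_eq_square algebra_simps)
  ultimately show ?thesis by (simp flip: exp_add)
qed

lemma norm_C_coef_le:
  assumes "0 < m"
  shows "cmod (C_coef \<gamma> \<sigma> L m r r0)
    \<le> \<bar>r\<bar> * cmod (b_coef \<gamma> \<sigma> L m) * exp (- ((\<bar>r\<bar> - \<bar>r0\<bar>)\<^sup>2 / noise_var))"
proof -
  let ?a = "a_coef \<gamma> \<sigma> L m" and ?b = "b_coef \<gamma> \<sigma> L m"
  have I: "cmod (besselI m (2 * ?b * complex_of_real r0 * complex_of_real r))
      \<le> exp (2 * cmod ?b * \<bar>r0\<bar> * \<bar>r\<bar>)"
    using norm_besselI_le[of m "2 * ?b * complex_of_real r0 * complex_of_real r"] by (simp add: norm_mult)
  have "cmod (C_coef \<gamma> \<sigma> L m r r0) = \<bar>r\<bar> * cmod ?b * (exp (- Re ?a * (r\<^sup>2 + r0\<^sup>2))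
      * cmod (besselI m (2 * ?b * complex_of_real r0 * complex_of_real r)))"
    unfolding C_coef_def norm_mult by simp
  also have "\<dots> \<le> \<bar>r\<bar> * cmod ?b * (exp (- Re ?a * (r\<^sup>2 + r0\<^sup>2)) * exp (2 * cmod ?b * \<bar>r0\<bar> * \<bar>r\<bar>))"
    by (intro mult_left_mono I) auto
  also have "\<dots> \<le> \<bar>r\<bar> * cmod ?b * exp (- ((\<bar>r\<bar> - \<bar>r0\<bar>)\<^sup>2 / noise_var))"
    using norm_b_coef_le_Re_a_coef[OF assms] Re_a_coef_ge[OF assms]
    by (intro mult_left_mono exp_quadratic_le_gauss) auto
  finally show ?thesis .
qed

lemma abs_pR_le: "\<bar>pR \<sigma> L r r0\<bar> \<le> 2 / noise_var * \<bar>r\<bar> * exp (- ((\<bar>r\<bar> - \<bar>r0\<bar>)\<^sup>2 / noise_var))"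
proof -
  let ?I = "Re (besselI 0 (complex_of_real (2 * r * r0 / noise_var)))"
  have "\<bar>?I\<bar> \<le> exp (cmod (complex_of_real (2 * r * r0 / noise_var)))"
    using abs_Re_le_cmod norm_besselI_le order.trans by blast
  also have "cmod (complex_of_real (2 * r * r0 / noise_var)) = 2 * (1 / noise_var) * \<bar>r0\<bar> * \<bar>r\<bar>"
    unfolding norm_of_real using noise_var_pos by (simp add: abs_mult)
  finally have I: "\<bar>?I\<bar> \<le> exp (2 * (1 / noise_var) * \<bar>r0\<bar> * \<bar>r\<bar>)" .
  have "(- r\<^sup>2 - r0\<^sup>2) / noise_var = - ((r\<^sup>2 + r0\<^sup>2) / noise_var)"
    by (simp add: add_divide_distrib diff_divide_distrib)
  then have "\<bar>pR \<sigma> L r r0\<bar> = 2 / noise_var * \<bar>r\<bar> * (exp (- (1 / noise_var) * (r\<^sup>2 + r0\<^sup>2)) * \<bar>?I\<bar>)"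
    unfolding pR_def noise_var_def[symmetric] using noise_var_pos
    by (simp add: abs_mult diff_divide_distrib add_divide_distrib)
  also have "\<dots> \<le> 2 / noise_var * \<bar>r\<bar> * (exp (- (1 / noise_var) * (r\<^sup>2 + r0\<^sup>2))
      * exp (2 * (1 / noise_var) * \<bar>r0\<bar> * \<bar>r\<bar>))"
    using noise_var_pos by (intro mult_left_mono I) auto
  also have "\<dots> \<le> 2 / noise_var * \<bar>r\<bar> * exp (- ((\<bar>r\<bar> - \<bar>r0\<bar>)\<^sup>2 / noise_var))"
    using noise_var_pos by (intro mult_left_mono exp_quadratic_le_gauss) auto
  finally show ?thesis .
qed

definition fourier_term :: "nat \<Rightarrow> real \<Rightarrow> real \<Rightarrow> real \<Rightarrow> real \<Rightarrow> real" where
  "fourier_term k r \<phi> r0 \<phi>0 = Re (C_coef \<gamma> \<sigma> L (Suc k) r r0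
     * exp (\<i> * of_nat (Suc k) * of_real (\<phi> - \<phi>0 - \<gamma> * r0\<^sup>2 * L)))"

lemma pzd_cond_eq_fourier:
  "pzd_cond \<gamma> \<sigma> L r \<phi> r0 \<phi>0 = pR \<sigma> L r r0 / (2 * pi) + 1 / pi * (\<Sum>k. fourier_term k r \<phi> r0 \<phi>0)"
  unfolding pzd_cond_def fourier_term_def ..

lemma abs_fourier_term_le:
  "\<bar>fourier_term k r \<phi> r0 \<phi>0\<bar>
     \<le> \<bar>r\<bar> * cmod (b_coef \<gamma> \<sigma> L (Suc k)) * exp (- ((\<bar>r\<bar> - \<bar>r0\<bar>)\<^sup>2 / noise_var))"
proof -
  have "\<bar>fourier_term k r \<phi> r0 \<phi>0\<bar> \<le> cmod (C_coef \<gamma> \<sigma> L (Suc k) r r0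
      * exp (\<i> * of_nat (Suc k) * of_real (\<phi> - \<phi>0 - \<gamma> * r0\<^sup>2 * L)))"
    unfolding fourier_term_def by (rule abs_Re_le_cmod)
  also have "\<dots> = cmod (C_coef \<gamma> \<sigma> L (Suc k) r r0)" by (simp add: norm_mult)
  also have "\<dots> \<le> \<bar>r\<bar> * cmod (b_coef \<gamma> \<sigma> L (Suc k)) * exp (- ((\<bar>r\<bar> - \<bar>r0\<bar>)\<^sup>2 / noise_var))"
    by (rule norm_C_coef_le) simp
  finally show ?thesis .
qed

lemma abs_fourier_term_le': "\<bar>fourier_term k r \<phi> r0 \<phi>0\<bar> \<le> \<bar>r\<bar> * cmod (b_coef \<gamma> \<sigma> L (Suc k))"
proof -
  have "exp (- ((\<bar>r\<bar> - \<bar>r0\<bar>)\<^sup>2 / noise_var)) \<le> 1" using noise_var_pos by simp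
  then show ?thesis
    using abs_fourier_term_le[of k r \<phi> r0 \<phi>0] mult_left_le[of _ "\<bar>r\<bar> * cmod (b_coef \<gamma> \<sigma> L (Suc k))"]
    by (meson order.trans mult_nonneg_nonneg abs_ge_zero norm_ge_zero)
qed

lemma summable_abs_fourier_term: "summable (\<lambda>k. \<bar>fourier_term k r \<phi> r0 \<phi>0\<bar>)"
  by (rule summable_comparison_test[OF _ summable_mult[OF summable_norm_b_coef, of "\<bar>r\<bar>"]])
     (auto intro!: exI[of _ 0] abs_fourier_term_le')

lemma abs_pzd_cond_le:
  "\<bar>pzd_cond \<gamma> \<sigma> L r \<phi> r0 \<phi>0\<bar> \<le> gauss_envelope kernel_const noise_var r r0"
proof -
  define E where "E = exp (- ((\<bar>r\<bar> - \<bar>r0\<bar>)\<^sup>2 / noise_var))"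
  have "\<bar>\<Sum>k. fourier_term k r \<phi> r0 \<phi>0\<bar> \<le> (\<Sum>k. \<bar>fourier_term k r \<phi> r0 \<phi>0\<bar>)"
    by (rule summable_rabs[OF summable_abs_fourier_term])
  also have "\<dots> \<le> (\<Sum>k. \<bar>r\<bar> * E * cmod (b_coef \<gamma> \<sigma> L (Suc k)))"
    by (rule suminf_le[OF _ summable_abs_fourier_term summable_mult[OF summable_norm_b_coef]])
       (use abs_fourier_term_le in \<open>simp add: E_def mult_ac\<close>)
  also have "\<dots> = \<bar>r\<bar> * E * b_sum" unfolding b_sum_def by (rule suminf_mult[OF summable_norm_b_coef])
  finally have S: "\<bar>\<Sum>k. fourier_term k r \<phi> r0 \<phi>0\<bar> \<le> \<bar>r\<bar> * E * b_sum" .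
  have "\<bar>pzd_cond \<gamma> \<sigma> L r \<phi> r0 \<phi>0\<bar>
      \<le> \<bar>pR \<sigma> L r r0\<bar> / (2 * pi) + 1 / pi * \<bar>\<Sum>k. fourier_term k r \<phi> r0 \<phi>0\<bar>"
    unfolding pzd_cond_eq_fourier by (rule order.trans[OF abs_triangle_ineq]) (simp add: abs_mult)
  also have "\<dots> \<le> (2 / noise_var * \<bar>r\<bar> * E) / (2 * pi) + 1 / pi * (\<bar>r\<bar> * E * b_sum)"
    using abs_pR_le[of r r0] S unfolding E_def by (intro add_mono divide_right_mono mult_left_mono) auto
  also have "\<dots> = gauss_envelope kernel_const noise_var r r0"
    unfolding gauss_envelope_def kernel_const_def E_def by (simp add: field_simps)
  finally show ?thesis .
qed


definition kernel :: "(real \<times> real) \<times> (real \<times> real) \<Rightarrow> real" where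
  "kernel q = pzd_cond \<gamma> \<sigma> L (fst (fst q)) (snd (fst q)) (fst (snd q)) (snd (snd q))"

lemma continuous_on_cball_kernel: "continuous_on (cball 0 R) kernel"
proof -
  let ?t = "\<lambda>k (q::(real \<times> real) \<times> (real \<times> real)).
    fourier_term k (fst (fst q)) (snd (fst q)) (fst (snd q)) (snd (snd q))"
  have "uniform_limit (cball 0 R) (\<lambda>n q. \<Sum>k<n. ?t k q) (\<lambda>q. \<Sum>k. ?t k q) sequentially"
  proof (rule Weierstrass_m_test)
    fix k and q :: "(real \<times> real) \<times> (real \<times> real)" assume "q \<in> cball 0 R"
    then have "\<bar>fst (fst q)\<bar> \<le> R"
      using norm_fst_le[of "fst (fst q)" "snd (fst q)"] norm_fst_le[of "fst q" "snd q"] by simp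
    then have "\<bar>fst (fst q)\<bar> * cmod (b_coef \<gamma> \<sigma> L (Suc k)) \<le> R * cmod (b_coef \<gamma> \<sigma> L (Suc k))"
      by (rule mult_right_mono) simp
    then show "norm (?t k q) \<le> R * cmod (b_coef \<gamma> \<sigma> L (Suc k))"
      using abs_fourier_term_le' real_norm_def order.trans by metis
  qed (rule summable_mult[OF summable_norm_b_coef])
  then have "continuous_on (cball 0 R) (\<lambda>q. \<Sum>k. ?t k q)"
    by (rule uniform_limit_theorem[rotated])
       (auto intro!: always_eventually continuous_on_sum continuous_intros
         simp: fourier_term_def C_coef_def)
  moreover have "continuous_on (cball 0 R)
      (\<lambda>q::(real \<times> real) \<times> (real \<times> real). pR \<sigma> L (fst (fst q)) (fst (snd q)))"
    unfolding pR_def by (intro continuous_intros) (use sigma_pos L_pos in auto)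
  ultimately show ?thesis
    unfolding kernel_def pzd_cond_eq_fourier by (intro continuous_intros) auto
qed

lemma isCont_kernel: "isCont kernel q"
  by (rule continuous_on_interior[OF continuous_on_cball_kernel[of "norm q + 1"]])
     (auto simp: interior_cball)

lemma continuous_on_kernel [continuous_intros]:
  "continuous_on S f \<Longrightarrow> continuous_on S (\<lambda>x. kernel (f x))"
  by (rule continuous_on_compose2[OF continuous_at_imp_continuous_on[of UNIV kernel]])
     (auto intro: isCont_kernel)

lemma kernel_measurable [measurable]: "kernel \<in> borel_measurable borel"
  by (rule borel_measurable_continuous_onI) (intro continuous_intros)

abbreviation envelope :: "real \<Rightarrow> real \<Rightarrow> real" where
  "envelope \<equiv> gauss_envelope kernel_const noise_var"

lemma abs_kernel_le: "\<bar>kernel (p, x)\<bar> \<le> envelope (fst p) (fst x)"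
  unfolding kernel_def using abs_pzd_cond_le by simp

lemma envelope_nonneg: "0 \<le> envelope r a"
  using gauss_envelope_nonneg kernel_const_pos less_imp_le by blast

lemma envelope_le: "envelope r a \<le> kernel_const * \<bar>r\<bar>"
  using gauss_envelope_le kernel_const_pos noise_var_pos less_imp_le by blast

end

section \<open>The output density and the entropy integrand\<close>

lemma input_distsD:
  assumes "F \<in> input_dists"
  shows "prob_space F" "sets F = sets borel" "AE x in F. 0 \<le> fst x" "AE x in F. snd x \<in> {0..<2*pi}"
  using assms unfolding input_dists_def by auto

lemma input_dists_measurable:
  "F \<in> input_dists \<Longrightarrow> f \<in> borel_measurable borel \<Longrightarrow> f \<in> borel_measurable F"
  using measurable_cong_sets[OF input_distsD(2) refl] by blast

definition output_domain :: "(real \<times> real) set" where "output_domain = {0..} \<times> {0..<2*pi}"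

lemma fst_measurable_borel [measurable]: "(fst :: real \<times> real \<Rightarrow> real) \<in> borel_measurable borel"
  by (rule borel_measurable_continuous_onI) (intro continuous_intros)

lemma output_domain_measurable [measurable]: "output_domain \<in> sets borel"
proof -
  have "{0..} \<times> {0..<2*pi} \<in> sets (borel \<Otimes>\<^sub>M borel :: (real \<times> real) measure)"
    by (intro pair_measureI) auto
  then show ?thesis unfolding output_domain_def borel_prod .
qed

definition amplitude_tail :: "(real \<times> real) measure \<Rightarrow> real \<Rightarrow> ennreal" where
  "amplitude_tail F R = (\<integral>\<^sup>+x. indicator {x. R < \<bar>fst x\<bar>} x * ennreal (8 + 4 * (fst x)\<^sup>2) \<partial>F)"

context pzd_channel
begin

definition mean_envelope :: "(real \<times> real) measure \<Rightarrow> real \<Rightarrow> real" where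
  "mean_envelope F r = (\<integral>x. envelope r (fst x) \<partial>F)"

definition entropy_majorant :: "(real \<times> real) measure \<Rightarrow> real \<Rightarrow> real" where
  "entropy_majorant F r = (2 + kernel_const) * r * mean_envelope F r + exp (- 2 * r)"

definition entropy_integrand :: "(real \<times> real) measure \<Rightarrow> real \<times> real \<Rightarrow> real" where
  "entropy_integrand F y = indicator output_domain y
     * (out_density \<gamma> \<sigma> L F (fst y) (snd y) * ln (out_density \<gamma> \<sigma> L F (fst y) (snd y)))"

lemma out_entropy_eq: "out_entropy \<gamma> \<sigma> L F = - (\<integral>y. entropy_integrand F y \<partial>lborel)"
  unfolding out_entropy_def set_lebesgue_integral_def entropy_integrand_def output_domain_def by simp

definition tail_bound :: "real \<Rightarrow> real \<Rightarrow> real" where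
  "tail_bound T e = 2 * pi * ((2 + kernel_const)
     * (2 * kernel_const * exp (4 * noise_var) * exp (- T) + kernel_const * exp (noise_var / 4) * e)
     + exp (- T))"

context
  fixes F :: "(real \<times> real) measure"
  assumes F: "F \<in> input_dists"
begin

interpretation prob_space F by (rule input_distsD(1)[OF F])

lemma integrable_kernel: "integrable F (\<lambda>x. kernel (p, x))"
proof (rule integrable_const_bound[where B = "kernel_const * \<bar>fst p\<bar>"])
  show "AE x in F. norm (kernel (p, x)) \<le> kernel_const * \<bar>fst p\<bar>"
    using abs_kernel_le[of p] envelope_le[of "fst p"] by (intro AE_I2) (metis order.trans real_norm_def)
  show "(\<lambda>x. kernel (p, x)) \<in> borel_measurable F"
    by (rule input_dists_measurable[OF F]) measurable
qed

lemma integrable_envelope: "integrable F (\<lambda>x. envelope r (fst x))"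
proof (rule integrable_const_bound[where B = "kernel_const * \<bar>r\<bar>"])
  show "AE x in F. norm (envelope r (fst x)) \<le> kernel_const * \<bar>r\<bar>"
    using envelope_le[of r] envelope_nonneg[of r] by (intro AE_I2) simp
  show "(\<lambda>x. envelope r (fst x)) \<in> borel_measurable F"
    by (rule input_dists_measurable[OF F], rule borel_measurable_continuous_onI)
       (use noise_var_pos in \<open>intro continuous_intros\<close>)
qed

lemma out_density_eq: "out_density \<gamma> \<sigma> L F r \<phi> = (\<integral>x. kernel ((r, \<phi>), x) \<partial>F)"
  unfolding out_density_def kernel_def by simp

lemma abs_out_density_le: "\<bar>out_density \<gamma> \<sigma> L F r \<phi>\<bar> \<le> mean_envelope F r"
  unfolding out_density_eq mean_envelope_def
  by (rule integral_abs_bound_integral[OF integrable_kernel integrable_envelope])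
     (use abs_kernel_le[of "(r, \<phi>)"] in simp)

lemma mean_envelope_nonneg: "0 \<le> mean_envelope F r"
  unfolding mean_envelope_def by (rule integral_nonneg_AE) (simp add: envelope_nonneg)

lemma mean_envelope_le: "mean_envelope F r \<le> kernel_const * \<bar>r\<bar>"
proof -
  have "mean_envelope F r \<le> (\<integral>x. kernel_const * \<bar>r\<bar> \<partial>F)"
    unfolding mean_envelope_def by (rule integral_mono[OF integrable_envelope]) (auto intro: envelope_le)
  then show ?thesis by (simp add: prob_space)
qed

lemma pair_measure_measurable_eq:
  "borel_measurable (lborel \<Otimes>\<^sub>M F) = borel_measurable (borel \<Otimes>\<^sub>M borel :: ('a::euclidean_space \<times> _) measure)"
  by (rule measurable_cong_sets) (simp_all add: input_distsD(2)[OF F] cong: sets_pair_measure_cong)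

lemma out_density_measurable [measurable]:
  "(\<lambda>y. out_density \<gamma> \<sigma> L F (fst y) (snd y)) \<in> borel_measurable lborel"
proof -
  have "kernel \<in> borel_measurable (borel \<Otimes>\<^sub>M borel)"
    unfolding borel_prod by (rule kernel_measurable)
  then have "(\<lambda>(y, x). kernel (y, x)) \<in> borel_measurable (lborel \<Otimes>\<^sub>M F)"
    unfolding pair_measure_measurable_eq by simp
  then have "(\<lambda>y. \<integral>x. kernel (y, x) \<partial>F) \<in> borel_measurable lborel"
    by (rule borel_measurable_lebesgue_integral)
  then show ?thesis by (simp add: out_density_eq)
qed

lemma mean_envelope_measurable [measurable]: "mean_envelope F \<in> borel_measurable borel"
proof -
  have "(\<lambda>p::real \<times> real \<times> real. envelope (fst p) (fst (snd p))) \<in> borel_measurable (borel \<Otimes>\<^sub>M borel)"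
    unfolding borel_prod
    by (rule borel_measurable_continuous_onI) (use noise_var_pos in \<open>intro continuous_intros\<close>)
  then have "(\<lambda>(r, x). envelope r (fst x)) \<in> borel_measurable (lborel \<Otimes>\<^sub>M F)"
    unfolding pair_measure_measurable_eq by (simp add: case_prod_beta)
  then have "(\<lambda>r. \<integral>x. envelope r (fst x) \<partial>F) \<in> borel_measurable lborel"
    by (rule borel_measurable_lebesgue_integral)
  then show ?thesis unfolding mean_envelope_def[abs_def] by simp
qed

lemma fst_measurable_input [measurable]: "(fst :: real \<times> real \<Rightarrow> real) \<in> borel_measurable F"
  by (rule input_dists_measurable[OF F fst_measurable_borel])

lemma entropy_integrand_measurable [measurable]: "entropy_integrand F \<in> borel_measurable borel"
  using out_density_measurable unfolding entropy_integrand_def by measurable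

lemma abs_entropy_integrand_le:
  "\<bar>entropy_integrand F y\<bar>
     \<le> indicator output_domain y * entropy_majorant F (fst y)"
proof (cases "y \<in> output_domain")
  case True
  then have "0 \<le> fst y" unfolding output_domain_def by auto
  then show ?thesis
    using True abs_mult_ln_le[OF _ abs_out_density_le mean_envelope_le, of "fst y"]
      kernel_const_pos
    unfolding entropy_integrand_def entropy_majorant_def by simp
qed (simp add: entropy_integrand_def)

lemma abs_entropy_integrand_le_compact:
  assumes "0 \<le> T"
  shows "\<bar>indicator {y. fst y \<le> T} y * entropy_integrand F y\<bar>
    \<le> indicator (cbox (0, 0) (T, 2 * pi)) y * ((2 + kernel_const) * kernel_const * T\<^sup>2 + 1)"
proof (cases "y \<in> output_domain \<and> fst y \<le> T")
  case True
  then have r: "0 \<le> fst y" "fst y \<le> T" "y \<in> cbox (0, 0) (T, 2 * pi)"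
    unfolding output_domain_def by (auto simp: cbox_Pair_eq mem_Times_iff)
  have "mean_envelope F (fst y) \<le> kernel_const * T"
    using mean_envelope_le[of "fst y"] r kernel_const_pos by (simp add: order.trans mult_left_mono)
  then have "(2 + kernel_const) * fst y * mean_envelope F (fst y) \<le> (2 + kernel_const) * T * (kernel_const * T)"
    using r kernel_const_pos mean_envelope_nonneg by (intro mult_mono) auto
  then have "(2 + kernel_const) * fst y * mean_envelope F (fst y) \<le> (2 + kernel_const) * kernel_const * T\<^sup>2"
    by (simp add: power2_eq_square mult_ac)
  moreover have "exp (- 2 * fst y) \<le> 1" using r by simp
  moreover have "\<bar>entropy_integrand F y\<bar>
      \<le> (2 + kernel_const) * fst y * mean_envelope F (fst y) + exp (- 2 * fst y)"
    using abs_entropy_integrand_le[of y] True by (simp add: entropy_majorant_def)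
  ultimately have "\<bar>entropy_integrand F y\<bar> \<le> (2 + kernel_const) * kernel_const * T\<^sup>2 + 1"
    by linarith
  then show ?thesis using True r by simp
qed (use kernel_const_pos in \<open>auto simp: entropy_integrand_def intro!: add_nonneg_nonneg\<close>)

lemma nn_integral_tail_mean_envelope:
  assumes "0 \<le> T"
  shows "(\<integral>\<^sup>+r. indicator {T<..} r * ennreal (r * mean_envelope F r) \<partial>lborel)
     = (\<integral>\<^sup>+x. envelope_tail kernel_const noise_var T (fst x) \<partial>F)"
proof -
  have "(\<integral>\<^sup>+r. indicator {T<..} r * ennreal (r * mean_envelope F r) \<partial>lborel)
      = (\<integral>\<^sup>+r. \<integral>\<^sup>+x. indicator {T<..} r * ennreal (r * envelope r (fst x)) \<partial>F \<partial>lborel)"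
  proof (rule nn_integral_cong)
    fix r :: real
    show "indicator {T<..} r * ennreal (r * mean_envelope F r)
        = (\<integral>\<^sup>+x. indicator {T<..} r * ennreal (r * envelope r (fst x)) \<partial>F)"
    proof (cases "T < r")
      case True
      then have "0 \<le> r" using assms by simp
      have "(\<integral>\<^sup>+x. ennreal (r * envelope r (fst x)) \<partial>F) = ennreal (r * mean_envelope F r)"
        unfolding mean_envelope_def using \<open>0 \<le> r\<close> envelope_nonneg integrable_envelope
        by (subst nn_integral_eq_integral) auto
      then show ?thesis using True by simp
    qed simp
  qed
  also have "\<dots> = (\<integral>\<^sup>+x. \<integral>\<^sup>+r. indicator {T<..} r * ennreal (r * envelope r (fst x)) \<partial>lborel \<partial>F)"
  proof -
    interpret pair_sigma_finite F lborel
      by (intro pair_sigma_finite.intro sigma_finite_measure_axioms lborel.sigma_finite_measure_axioms)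
    show ?thesis
      by (rule Fubini'[where f = "\<lambda>x r. indicator {T<..} r * ennreal (r * envelope r (fst x))"])
         (unfold gauss_envelope_def, measurable)
  qed
  finally show ?thesis unfolding envelope_tail_def .
qed

lemma nn_integral_tail_entropy_integrand_le:
  assumes "0 \<le> T"
  shows "(\<integral>\<^sup>+y. indicator {y. T < fst y} y * ennreal \<bar>entropy_integrand F y\<bar> \<partial>lborel)
    \<le> ennreal (2 * pi) * (\<integral>\<^sup>+r. indicator {T<..} r
          * ennreal (entropy_majorant F r) \<partial>lborel)"
proof -
  define G where "G r = indicator {T<..} r * ennreal (entropy_majorant F r)"
    for r
  have [measurable]: "G \<in> borel_measurable borel" unfolding G_def entropy_majorant_def by measurable
  have "(\<integral>\<^sup>+y. indicator {y. T < fst y} y * ennreal \<bar>entropy_integrand F y\<bar> \<partial>lborel)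
      \<le> (\<integral>\<^sup>+y. G (fst y) * indicator {0..<2*pi} (snd y) \<partial>lborel)"
  proof (rule nn_integral_mono)
    fix y :: "real \<times> real"
    show "indicator {y. T < fst y} y * ennreal \<bar>entropy_integrand F y\<bar> \<le> G (fst y) * indicator {0..<2*pi} (snd y)"
      using abs_entropy_integrand_le[of y] assms
      by (cases "T < fst y") (auto simp: G_def output_domain_def mem_Times_iff intro!: ennreal_leI
          split: split_indicator)
  qed
  also have "\<dots> = (\<integral>\<^sup>+r. \<integral>\<^sup>+\<phi>. G r * indicator {0..<2*pi} \<phi> \<partial>lborel \<partial>lborel)"
    unfolding lborel_prod[symmetric]
    by (rule lborel.nn_integral_fst[symmetric, where f = "\<lambda>y. G (fst y) * indicator {0..<2*pi} (snd y)", simplified])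
       measurable
  also have "\<dots> = (\<integral>\<^sup>+r. G r * ennreal (2 * pi) \<partial>lborel)"
    by (simp add: nn_integral_cmult_indicator)
  also have "\<dots> = ennreal (2 * pi) * (\<integral>\<^sup>+r. G r \<partial>lborel)"
    by (subst nn_integral_multc) (simp_all add: mult.commute)
  finally show ?thesis unfolding G_def .
qed

lemma nn_integral_tail_entropy_majorant_le:
  assumes "0 \<le> T"
  shows "(\<integral>\<^sup>+r. indicator {T<..} r * ennreal (entropy_majorant F r) \<partial>lborel)
    \<le> ennreal (2 + kernel_const) * (\<integral>\<^sup>+x. envelope_tail kernel_const noise_var T (fst x) \<partial>F)
       + ennreal (exp (- T))"
proof -
  have split: "indicator {T<..} r * ennreal (entropy_majorant F r)
      = ennreal (2 + kernel_const) * (indicator {T<..} r * ennreal (r * mean_envelope F r))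
        + indicator {T<..} r * ennreal (exp (- 2 * r))" for r
    using assms kernel_const_pos mean_envelope_nonneg[of r] unfolding entropy_majorant_def
    by (cases "T < r") (simp_all add: ennreal_plus ennreal_mult' mult_ac)
  have "(\<integral>\<^sup>+r. indicator {T<..} r * ennreal (exp (- 2 * r)) \<partial>lborel)
      \<le> (\<integral>\<^sup>+r. ennreal (exp (- T)) * (indicator {0..} r * ennreal (r ^ 0 * exp (- r))) \<partial>lborel)"
  proof (rule nn_integral_mono)
    fix r :: real
    have "T < r \<Longrightarrow> exp (- 2 * r) \<le> exp (- T) * exp (- r)" by (simp flip: exp_add)
    then show "indicator {T<..} r * ennreal (exp (- 2 * r))
        \<le> ennreal (exp (- T)) * (indicator {0..} r * ennreal (r ^ 0 * exp (- r)))"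
      using assms by (cases "T < r") (simp_all add: ennreal_leI flip: ennreal_mult)
  qed
  also have "\<dots> = ennreal (exp (- T))"
    using nn_integral_power_exp_Ici[of 0] by (subst nn_integral_cmult) auto
  finally have "(\<integral>\<^sup>+r. indicator {T<..} r * ennreal (exp (- 2 * r)) \<partial>lborel) \<le> ennreal (exp (- T))" .
  then show ?thesis
    unfolding split nn_integral_tail_mean_envelope[OF assms, symmetric]
    by (subst nn_integral_add) (auto intro!: add_mono simp: nn_integral_cmult)
qed

lemma nn_integral_envelope_tail_le:
  assumes "0 \<le> R" "2 * R \<le> T"
  shows "(\<integral>\<^sup>+x. envelope_tail kernel_const noise_var T (fst x) \<partial>F)
    \<le> ennreal (2 * kernel_const * exp (4 * noise_var) * exp (- T))
      + ennreal (kernel_const * exp (noise_var / 4)) * amplitude_tail F R"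
proof -
  let ?c1 = "2 * kernel_const * exp (4 * noise_var) * exp (- T)"
    and ?c2 = "kernel_const * exp (noise_var / 4)"
  have "envelope_tail kernel_const noise_var T (fst x)
      \<le> ennreal ?c1 + ennreal ?c2 * (indicator {x. R < \<bar>fst x\<bar>} x * ennreal (8 + 4 * (fst x)\<^sup>2))" for x
  proof (cases "R < \<bar>fst x\<bar>")
    case True
    have "envelope_tail kernel_const noise_var T (fst x) \<le> ennreal (?c2 * (8 + 4 * (fst x)\<^sup>2))"
      using envelope_tail_le[of kernel_const noise_var T "fst x"] kernel_const_pos noise_var_pos assms
      by simp
    then show ?thesis using True kernel_const_pos by (simp add: ennreal_mult' add_increasing)
  next
    case False
    then have "envelope_tail kernel_const noise_var T (fst x) \<le> ennreal ?c1"
      using envelope_tail_far[of kernel_const noise_var T "fst x"] kernel_const_pos noise_var_pos assms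
      by simp
    then show ?thesis by (simp add: add_increasing2)
  qed
  then have "(\<integral>\<^sup>+x. envelope_tail kernel_const noise_var T (fst x) \<partial>F)
      \<le> (\<integral>\<^sup>+x. ennreal ?c1 + ennreal ?c2 * (indicator {x. R < \<bar>fst x\<bar>} x * ennreal (8 + 4 * (fst x)\<^sup>2)) \<partial>F)"
    by (intro nn_integral_mono)
  also have "\<dots> = ennreal ?c1 + ennreal ?c2 * amplitude_tail F R"
    unfolding amplitude_tail_def
    by (subst nn_integral_add) (auto simp: nn_integral_cmult emeasure_space_1)
  finally show ?thesis .
qed

lemma nn_integral_tail_entropy_integrand_le_tail_bound:
  assumes "0 \<le> R" "2 * R \<le> T" "amplitude_tail F R \<le> ennreal e" "0 \<le> e"
  shows "(\<integral>\<^sup>+y. indicator {y. T < fst y} y * ennreal \<bar>entropy_integrand F y\<bar> \<partial>lborel)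
    \<le> ennreal (tail_bound T e)"
proof -
  let ?c1 = "2 * kernel_const * exp (4 * noise_var) * exp (- T)"
    and ?c2 = "kernel_const * exp (noise_var / 4)"
  have T: "0 \<le> T" using assms by linarith
  have "(\<integral>\<^sup>+y. indicator {y. T < fst y} y * ennreal \<bar>entropy_integrand F y\<bar> \<partial>lborel)
      \<le> ennreal (2 * pi) * (\<integral>\<^sup>+r. indicator {T<..} r * ennreal (entropy_majorant F r) \<partial>lborel)"
    by (rule nn_integral_tail_entropy_integrand_le[OF T])
  also have "\<dots> \<le> ennreal (2 * pi) * (ennreal (2 + kernel_const)
      * (\<integral>\<^sup>+x. envelope_tail kernel_const noise_var T (fst x) \<partial>F) + ennreal (exp (- T)))"
    by (intro mult_left_mono nn_integral_tail_entropy_majorant_le[OF T]) simp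
  also have "\<dots> \<le> ennreal (2 * pi) * (ennreal (2 + kernel_const)
      * (ennreal ?c1 + ennreal ?c2 * ennreal e) + ennreal (exp (- T)))"
    using nn_integral_envelope_tail_le[OF assms(1,2)]
    by (intro mult_left_mono add_mono order.refl) (auto elim!: order.trans intro!: mult_left_mono assms(3))
  also have "\<dots> = ennreal (tail_bound T e)"
    unfolding tail_bound_def using kernel_const_pos assms(4)
    by (simp add: ennreal_mult[symmetric] ennreal_plus[symmetric] del: ennreal_plus)
  finally show ?thesis .
qed

lemma integrable_entropy_integrand_head:
  assumes "0 \<le> T"
  shows "integrable lborel (\<lambda>y. indicator {y. fst y \<le> T} y * entropy_integrand F y)"
proof (rule Bochner_Integration.integrable_bound)
  show "integrable lborel
      (\<lambda>y. indicator (cbox (0, 0) (T, 2 * pi)) y * ((2 + kernel_const) * kernel_const * T\<^sup>2 + 1))"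
    by (intro integrable_mult_left integrable_real_indicator emeasure_lborel_cbox_finite) simp
  show "AE y in lborel. norm (indicator {y. fst y \<le> T} y * entropy_integrand F y)
      \<le> norm (indicator (cbox (0, 0) (T, 2 * pi)) y * ((2 + kernel_const) * kernel_const * T\<^sup>2 + 1))"
    using abs_entropy_integrand_le_compact[OF assms] by (intro AE_I2) (simp add: order.trans[OF _ abs_ge_self])
qed measurable

lemma entropy_integrand_tail:
  assumes "0 \<le> R" "2 * R \<le> T" "amplitude_tail F R \<le> ennreal e" "0 \<le> e"
  shows "integrable lborel (\<lambda>y. indicator {y. T < fst y} y * entropy_integrand F y)"
    and "\<bar>\<integral>y. indicator {y. T < fst y} y * entropy_integrand F y \<partial>lborel\<bar> \<le> tail_bound T e"
proof -
  have "(\<integral>\<^sup>+y. norm (indicator {y. T < fst y} y * entropy_integrand F y) \<partial>lborel)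
      = (\<integral>\<^sup>+y. indicator {y. T < fst y} y * ennreal \<bar>entropy_integrand F y\<bar> \<partial>lborel)"
    by (intro nn_integral_cong) (auto split: split_indicator)
  also have "\<dots> \<le> ennreal (tail_bound T e)"
    by (rule nn_integral_tail_entropy_integrand_le_tail_bound[OF assms])
  finally have bound: "(\<integral>\<^sup>+y. norm (indicator {y. T < fst y} y * entropy_integrand F y) \<partial>lborel)
      \<le> ennreal (tail_bound T e)" .
  then show int: "integrable lborel (\<lambda>y. indicator {y. T < fst y} y * entropy_integrand F y)"
    by (intro integrableI_bounded) (auto simp: top_unique less_top[symmetric] intro: le_less_trans)
  have "0 \<le> tail_bound T e"
    unfolding tail_bound_def using kernel_const_pos assms(4) by (intro mult_nonneg_nonneg add_nonneg_nonneg) auto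
  then show "\<bar>\<integral>y. indicator {y. T < fst y} y * entropy_integrand F y \<partial>lborel\<bar> \<le> tail_bound T e"
    using order.trans[OF integral_norm_bound_ennreal[OF int] bound] by (simp add: ennreal_le_iff)
qed

lemma abs_integral_entropy_integrand_sub_head_le:
  assumes "0 \<le> R" "2 * R \<le> T" "amplitude_tail F R \<le> ennreal e" "0 \<le> e"
  shows "\<bar>(\<integral>y. entropy_integrand F y \<partial>lborel)
      - (\<integral>y. indicator {y. fst y \<le> T} y * entropy_integrand F y \<partial>lborel)\<bar> \<le> tail_bound T e"
proof -
  have "(\<integral>y. entropy_integrand F y \<partial>lborel) = (\<integral>y. indicator {y. fst y \<le> T} y * entropy_integrand F y
      + indicator {y. T < fst y} y * entropy_integrand F y \<partial>lborel)"
    by (rule Bochner_Integration.integral_cong) (auto split: split_indicator)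
  also have "\<dots> = (\<integral>y. indicator {y. fst y \<le> T} y * entropy_integrand F y \<partial>lborel)
      + (\<integral>y. indicator {y. T < fst y} y * entropy_integrand F y \<partial>lborel)"
    using assms by (intro Bochner_Integration.integral_add integrable_entropy_integrand_head
        entropy_integrand_tail(1)[OF assms]) auto
  finally show ?thesis using entropy_integrand_tail(2)[OF assms] by simp
qed

end

lemma tendsto_out_density:
  assumes "\<And>n. Fn n \<in> input_dists" "F \<in> input_dists" "weak_conv_seq Fn F"
  shows "(\<lambda>n. out_density \<gamma> \<sigma> L (Fn n) r \<phi>) \<longlonglongrightarrow> out_density \<gamma> \<sigma> L F r \<phi>"
proof -
  have "norm (kernel ((r, \<phi>), x)) \<le> kernel_const * \<bar>r\<bar>" for x
    using abs_kernel_le[of "(r, \<phi>)" x] envelope_le[of r "fst x"] by simp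
  then have "bounded (range (\<lambda>x. kernel ((r, \<phi>), x)))" unfolding bounded_iff by blast
  moreover have "continuous_on UNIV (\<lambda>x. kernel ((r, \<phi>), x))" by (intro continuous_intros)
  ultimately show ?thesis
    using assms(3) unfolding weak_conv_seq_def out_density_eq[OF assms(1)] out_density_eq[OF assms(2)]
    by blast
qed

end

lemma weakly_continuous_on_subset:
  "weakly_continuous_on S H \<Longrightarrow> S' \<subseteq> S \<Longrightarrow> weakly_continuous_on S' H"
  unfolding weakly_continuous_on_def by blast

context pzd_channel
begin

lemma tendsto_integral_entropy_integrand_head:
  assumes "\<And>n. Fn n \<in> input_dists" "F \<in> input_dists" "weak_conv_seq Fn F" "0 \<le> T"
  shows "(\<lambda>n. \<integral>y. indicator {y. fst y \<le> T} y * entropy_integrand (Fn n) y \<partial>lborel)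
    \<longlonglongrightarrow> (\<integral>y. indicator {y. fst y \<le> T} y * entropy_integrand F y \<partial>lborel)"
proof (rule integral_dominated_convergence)
  let ?W = "\<lambda>y. indicator (cbox (0, 0) (T, 2 * pi)) y * ((2 + kernel_const) * kernel_const * T\<^sup>2 + 1)"
  show "integrable lborel ?W"
    by (intro integrable_mult_left integrable_real_indicator emeasure_lborel_cbox_finite) simp
  show "AE y in lborel. norm (indicator {y. fst y \<le> T} y * entropy_integrand (Fn n) y) \<le> ?W y" for n
    using abs_entropy_integrand_le_compact[OF assms(1) assms(4)] by (intro AE_I2) simp
  show "AE y in lborel. (\<lambda>n. indicator {y. fst y \<le> T} y * entropy_integrand (Fn n) y)
      \<longlonglongrightarrow> indicator {y. fst y \<le> T} y * entropy_integrand F y"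
    unfolding entropy_integrand_def
    by (intro AE_I2 tendsto_mult_left isCont_tendsto_compose[OF isCont_mult_ln] tendsto_out_density assms)
  show "(\<lambda>y. indicator {y. fst y \<le> T} y * entropy_integrand F y) \<in> borel_measurable lborel"
    using entropy_integrand_measurable[OF assms(2)] by measurable
  show "(\<lambda>y. indicator {y. fst y \<le> T} y * entropy_integrand (Fn n) y) \<in> borel_measurable lborel" for n
    using entropy_integrand_measurable[OF assms(1)] by measurable
qed

lemma tail_bound_small:
  assumes "0 < \<epsilon>"
  obtains e T0 where "0 < e" "\<And>T. T0 \<le> T \<Longrightarrow> tail_bound T e \<le> \<epsilon>"
proof -
  define c1 c2 where "c1 = 2 * pi * ((2 + kernel_const) * (2 * kernel_const * exp (4 * noise_var)) + 1)"
    and "c2 = 2 * pi * (2 + kernel_const) * kernel_const * exp (noise_var / 4)"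
  have c: "0 < c1" "0 < c2" unfolding c1_def c2_def using kernel_const_pos by (simp_all add: add_pos_nonneg)
  have "tail_bound T (\<epsilon> / (2 * c2)) \<le> \<epsilon>" if "ln (2 * c1 / \<epsilon>) \<le> T" for T
  proof -
    have "exp (- T) \<le> exp (- ln (2 * c1 / \<epsilon>))" using that by simp
    also have "\<dots> = \<epsilon> / (2 * c1)" using c assms by (simp add: exp_minus)
    finally have "c1 * exp (- T) \<le> \<epsilon> / 2" using c by (simp add: field_simps)
    moreover have "tail_bound T (\<epsilon> / (2 * c2)) = c1 * exp (- T) + c2 * (\<epsilon> / (2 * c2))"
      unfolding tail_bound_def c1_def c2_def by (simp add: algebra_simps)
    ultimately show ?thesis using c by simp
  qed
  then show ?thesis by (intro that[of "\<epsilon> / (2 * c2)" "ln (2 * c1 / \<epsilon>)"]) (use c assms in auto)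
qed

lemma weakly_continuous_on_out_entropy:
  assumes S: "S \<subseteq> input_dists"
    and tight: "\<And>e. 0 < e \<Longrightarrow> \<exists>R\<ge>0. \<forall>F\<in>S. amplitude_tail F R \<le> ennreal e"
  shows "weakly_continuous_on S (out_entropy \<gamma> \<sigma> L)"
  unfolding weakly_continuous_on_def out_entropy_eq
proof (intro allI impI tendsto_minus, elim conjE)
  fix Fn F assume FnS: "\<forall>n. Fn n \<in> S" and FS: "F \<in> S" and w: "weak_conv_seq Fn F"
  let ?I = "\<lambda>F. \<integral>y. entropy_integrand F y \<partial>lborel"
  let ?H = "\<lambda>T F. \<integral>y. indicator {y. fst y \<le> T} y * entropy_integrand F y \<partial>lborel"
  show "(\<lambda>n. ?I (Fn n)) \<longlonglongrightarrow> ?I F"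
  proof (rule LIMSEQ_I)
    fix \<epsilon> :: real assume "0 < \<epsilon>"
    then have "0 < \<epsilon> / 3" by simp
    then obtain e T0 where e: "0 < e" and T0: "\<And>T. T0 \<le> T \<Longrightarrow> tail_bound T e \<le> \<epsilon> / 3"
      using tail_bound_small by blast
    obtain R where R: "0 \<le> R" "\<And>F. F \<in> S \<Longrightarrow> amplitude_tail F R \<le> ennreal e"
      using tight[OF e] by blast
    define T where "T = max (2 * R) T0"
    have T: "2 * R \<le> T" "0 \<le> T" "tail_bound T e \<le> \<epsilon> / 3" using R T0 unfolding T_def by auto
    have tail: "\<bar>?I G - ?H T G\<bar> \<le> \<epsilon> / 3" if "G \<in> S" for G
      using abs_integral_entropy_integrand_sub_head_le[OF subsetD[OF S that] R(1) T(1) R(2)[OF that]]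
        e T(3) by simp
    have "(\<lambda>n. ?H T (Fn n)) \<longlonglongrightarrow> ?H T F"
      using FnS FS S w T(2) by (intro tendsto_integral_entropy_integrand_head) auto
    from LIMSEQ_D[OF this \<open>0 < \<epsilon> / 3\<close>]
    obtain N where N: "\<And>n. N \<le> n \<Longrightarrow> \<bar>?H T (Fn n) - ?H T F\<bar> < \<epsilon> / 3"
      unfolding real_norm_def by blast
    have "\<bar>?I (Fn n) - ?I F\<bar> < \<epsilon>" if "N \<le> n" for n
      using tail[OF FS] tail[of "Fn n"] FnS N[OF that] unfolding abs_less_iff abs_le_iff by auto
    then show "\<exists>N. \<forall>n\<ge>N. norm (?I (Fn n) - ?I F) < \<epsilon>" by auto
  qed
qed

lemma weakly_continuous_on_peak_set: "0 < \<rho> \<Longrightarrow> weakly_continuous_on (peak_set \<rho>) (out_entropy \<gamma> \<sigma> L)"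
proof (rule weakly_continuous_on_out_entropy)
  show "peak_set \<rho> \<subseteq> input_dists" unfolding peak_set_def by auto
  fix e :: real assume "0 < \<rho>" "0 < e"
  have "amplitude_tail F \<rho> = 0" if "F \<in> peak_set \<rho>" for F
  proof -
    have "AE x in F. fst x \<le> \<rho>" "AE x in F. 0 \<le> fst x"
      using that input_distsD(3) unfolding peak_set_def by auto
    then have "amplitude_tail F \<rho> \<le> (\<integral>\<^sup>+x. 0 \<partial>F)"
      unfolding amplitude_tail_def by (intro nn_integral_mono_AE) (auto simp: indicator_def)
    then show ?thesis by simp
  qed
  then show "\<exists>R\<ge>0. \<forall>F\<in>peak_set \<rho>. amplitude_tail F R \<le> ennreal e"
    using \<open>0 < \<rho>\<close> by (intro exI[of _ \<rho>]) auto
qed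

end

section \<open>The amplitude constraints\<close>

lemma quadratic_le_cost_eventually:
  fixes C :: "real \<Rightarrow> real"
  assumes "filterlim (\<lambda>r. C r / r\<^sup>2) at_top at_top" "0 < c"
  obtains R where "0 \<le> R" "\<And>r. R < r \<Longrightarrow> 8 + 4 * r\<^sup>2 \<le> c * C r"
proof -
  obtain N where N: "\<And>r. N \<le> r \<Longrightarrow> 12 / c \<le> C r / r\<^sup>2"
    using assms(1) unfolding filterlim_at_top eventually_at_top_linorder by blast
  have "8 + 4 * r\<^sup>2 \<le> c * C r" if r: "max N 1 < r" for r
  proof -
    have "1 \<le> r\<^sup>2" using r by (simp add: one_le_power)
    moreover have "12 / c * r\<^sup>2 \<le> C r"
      using N[of r] r mult_right_mono[OF N[of r], of "r\<^sup>2"] by simp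
    then have "12 * r\<^sup>2 \<le> c * C r" using assms(2) by (simp add: field_simps)
    ultimately show ?thesis by linarith
  qed
  then show ?thesis by (intro that[of "max N 1"]) auto
qed

lemma amplitude_tail_cost_set_le:
  assumes C: "admissible_cost C" and F: "F \<in> cost_set C A"
    and R: "\<And>r. R < r \<Longrightarrow> 8 + 4 * r\<^sup>2 \<le> c * C r" and "0 \<le> R" "0 < c" "0 \<le> A"
  shows "amplitude_tail F R \<le> ennreal (c * A)"
proof -
  have F': "F \<in> input_dists" and cost: "(\<integral>\<^sup>+x. ennreal (C (fst x)) \<partial>F) \<le> ennreal A"
    using F unfolding cost_set_def by auto
  have "mono_on {0..} C" using C unfolding admissible_cost_def by auto
  then have "mono (\<lambda>t. C (max 0 t))"
    by (intro monoI) (auto intro: mono_onD)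
  then have [measurable]: "(\<lambda>t. C (max 0 t)) \<in> borel_measurable borel" by (rule borel_measurable_mono)
  have [measurable]: "fst \<in> borel_measurable F" by (rule input_dists_measurable[OF F' fst_measurable_borel])
  have nonneg: "AE x in F. 0 \<le> fst x" by (rule input_distsD(3)[OF F'])
  have "amplitude_tail F R \<le> (\<integral>\<^sup>+x. ennreal c * ennreal (C (max 0 (fst x))) \<partial>F)"
    unfolding amplitude_tail_def
  proof (rule nn_integral_mono_AE)
    show "AE x in F. indicator {x. R < \<bar>fst x\<bar>} x * ennreal (8 + 4 * (fst x)\<^sup>2)
        \<le> ennreal c * ennreal (C (max 0 (fst x)))"
      using nonneg
    proof eventually_elim
      case (elim x)
      show ?case
      proof (cases "R < \<bar>fst x\<bar>")
        case True
        then have "ennreal (8 + 4 * (fst x)\<^sup>2) \<le> ennreal (c * C (fst x))"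
          using elim R by (intro ennreal_leI) simp
        also have "\<dots> = ennreal c * ennreal (C (fst x))" using \<open>0 < c\<close> by (simp add: ennreal_mult')
        finally show ?thesis using True elim by simp
      qed simp
    qed
  qed
  also have "\<dots> = ennreal c * (\<integral>\<^sup>+x. ennreal (C (max 0 (fst x))) \<partial>F)"
    by (rule nn_integral_cmult) measurable
  also have "(\<integral>\<^sup>+x. ennreal (C (max 0 (fst x))) \<partial>F) = (\<integral>\<^sup>+x. ennreal (C (fst x)) \<partial>F)"
    by (rule nn_integral_cong_AE) (use nonneg in \<open>auto simp: max_def\<close>)
  also have "ennreal c * (\<integral>\<^sup>+x. ennreal (C (fst x)) \<partial>F) \<le> ennreal c * ennreal A"
    by (rule mult_left_mono[OF cost]) simp
  also have "\<dots> = ennreal (c * A)" using \<open>0 < c\<close> by (simp add: ennreal_mult')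
  finally show ?thesis .
qed

context pzd_channel
begin

lemma weakly_continuous_on_cost_set:
  assumes "0 < A" "admissible_cost C" "filterlim (\<lambda>r. C r / r\<^sup>2) at_top at_top"
  shows "weakly_continuous_on (cost_set C A) (out_entropy \<gamma> \<sigma> L)"
proof (rule weakly_continuous_on_out_entropy)
  show "cost_set C A \<subseteq> input_dists" unfolding cost_set_def by auto
  fix e :: real assume "0 < e"
  then obtain R where "0 \<le> R" "\<And>r. R < r \<Longrightarrow> 8 + 4 * r\<^sup>2 \<le> e / A * C r"
    using quadratic_le_cost_eventually[OF assms(3), of "e / A"] assms(1) by auto
  then have "amplitude_tail F R \<le> ennreal e" if "F \<in> cost_set C A" for F
    using amplitude_tail_cost_set_le[OF assms(2) that, of R "e / A"] assms(1) \<open>0 < e\<close> by simp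
  then show "\<exists>R\<ge>0. \<forall>F\<in>cost_set C A. amplitude_tail F R \<le> ennreal e"
    using \<open>0 \<le> R\<close> by blast
qed

end

theorem mainTheorem10:
  fixes \<gamma> \<sigma> L \<rho> A :: real and C C' :: "real \<Rightarrow> real"
  assumes "\<gamma> > 0" "\<sigma> > 0" "L > 0" "\<rho> > 0" "A > 0"
    and "admissible_cost C" "filterlim (\<lambda>r. C r / r\<^sup>2) at_top at_top"
    and "admissible_cost C'" "filterlim (\<lambda>r. C' r / ln r) at_top at_top"
  shows "weakly_continuous_on (peak_set \<rho>) (out_entropy \<gamma> \<sigma> L)
       \<and> weakly_continuous_on (cost_set C A) (out_entropy \<gamma> \<sigma> L)
       \<and> weakly_continuous_on (peak_set \<rho> \<inter> cost_set C' A) (out_entropy \<gamma> \<sigma> L)"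
proof -
  interpret pzd_channel \<gamma> \<sigma> L using assms(1-3) by unfold_locales
  have peak: "weakly_continuous_on (peak_set \<rho>) (out_entropy \<gamma> \<sigma> L)"
    by (rule weakly_continuous_on_peak_set[OF assms(4)])
  moreover have "weakly_continuous_on (cost_set C A) (out_entropy \<gamma> \<sigma> L)"
    by (rule weakly_continuous_on_cost_set[OF assms(5-7)])
  moreover have "weakly_continuous_on (peak_set \<rho> \<inter> cost_set C' A) (out_entropy \<gamma> \<sigma> L)"
    by (rule weakly_continuous_on_subset[OF peak]) blast
  ultimately show ?thesis by blast
qed

end
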